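(* There exists a computable function $f:\mathbb{N}\to\mathbb{N}$ such that the following holds. Let $G=(V,E)$ be an undirected graph with pathwidth $w$, let $\varphi$ be an $\mathit{MSO}_2$ formula interpreted over $G$, and let $n=|V|+|E|$ and $k=w+|\varphi|$. Then there exists an ordered binary decision diagram (OBDD) computing $\mathcal{F}_{\varphi,G}$ with at most $f(k)\cdot n$ nodes. (That is, the OBDD size is fixed-parameter linear in $n$ with respect to $k$.)
   Context: $\mathit{MSO}_2$: formulas are interpreted over a graph $G=(V,E)$ with two disjoint universes $U_V=V$ and $U_E=E$. There are four kinds of variables: vertex object variables (values in $V$), edge object variables (values in $E$), vertex set variables (subsets of $V$), edge set variables (subsets of $E$). Atomic formulas: $\mathit{Adj}(v,e)$ (true iff the vertex assigned to $v$ is an endpoint of the edge assigned to $e$); $x=y$ for object variables of the same sort; $x\in Y$ for an object variable and set variable of the same sort. Formulas are closed under $\neg$, $\wedge$ and existential quantification over variables of each kind, with the usual semantics. Size: atomic formulas have size 3, $|\neg\psi|=1+|\psi|$, $|\psi\wedge\rho|=1+|\psi|+|\rho|$, $|(\exists\cdot)\psi|=1+|\psi|$. Decision variables $\mathcal{D}_{\varphi,G}$: $[x=v]$ for each free vertex object variable $x$ of $\varphi$ and $v\in V$; $[x=e]$ for each free edge object variable $x$ and $e\in E$; $[v\in X]$ for each free vertex set variable $X$ and $v\in V$; $[e\in X]$ for each free edge set variable $X$ and $e\in E$. A Boolean assignment $\delta$ to $\mathcal{D}_{\varphi,G}$ is consistent if for every free vertex (resp. edge) object variable $x$ exactly one of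 $[x=u]$, $u\in V$ (resp. $[x=e]$, $e\in E$) is true; it then encodes the assignment $\alpha$ with $\alpha(x)=$ the unique $o$ with $\delta([x=o])=1$ and $\alpha(X)=\{o:\delta([o\in X])=1\}$. $\mathcal{F}_{\varphi,G}$ is the Boolean function on $\mathcal{D}_{\varphi,G}$ whose models are exactly the consistent assignments encoding assignments satisfying $\varphi$ on $G$. An OBDD is a rooted DAG with a unique source, internal decision nodes labeled by variables with a 0-edge and a 1-edge, and leaves labeled $0$ or $1$, such that along every path variables appear in accordance with a fixed strict linear order; it computes a function $f$ if its variables are among those of $f$ and the value obtained by following edges according to an assignment equals $f$ on that assignment. Pathwidth is the minimum width of a tree decomposition whose tree is a path. *)

theory Defs
  imports Main
begin

datatype recf = RZ | RS | RProj nat | RComp recf "recf list" | RPrec recf recf | RMn recf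

inductive reval :: "recf \<Rightarrow> nat list \<Rightarrow> nat \<Rightarrow> bool" where
  zero: "reval RZ xs 0"
| succ: "reval RS (x # xs) (Suc x)"
| proj: "i < length xs \<Longrightarrow> reval (RProj i) xs (xs ! i)"
| comp: "list_all2 (\<lambda>g y. reval g xs y) gs ys \<Longrightarrow> reval f ys z \<Longrightarrow> reval (RComp f gs) xs z"
| prec0: "reval f xs y \<Longrightarrow> reval (RPrec f g) (0 # xs) y"
| precS: "reval (RPrec f g) (n # xs) y \<Longrightarrow> reval g (n # y # xs) z
           \<Longrightarrow> reval (RPrec f g) (Suc n # xs) z"
| mn: "reval f (y # xs) 0 \<Longrightarrow> (\<forall>z<y. \<exists>m. reval f (z # xs) (Suc m))
           \<Longrightarrow> reval (RMn f) xs y"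

definition computable :: "(nat \<Rightarrow> nat) \<Rightarrow> bool" where
  "computable f \<longleftrightarrow> (\<exists>r. \<forall>n. reval r [n] (f n))"

definition graph :: "nat set \<Rightarrow> nat set set \<Rightarrow> bool" where
  "graph V E \<longleftrightarrow> finite V \<and> E \<subseteq> {{u, v} | u v. u \<in> V \<and> v \<in> V \<and> u \<noteq> v}"

definition path_decomp :: "nat set \<Rightarrow> nat set set \<Rightarrow> nat set list \<Rightarrow> bool" where
  "path_decomp V E B \<longleftrightarrow> B \<noteq> [] \<and> (\<forall>b\<in>set B. b \<subseteq> V)
     \<and> (\<forall>v\<in>V. \<exists>b\<in>set B. v \<in> b) \<and> (\<forall>e\<in>E. \<exists>b\<in>set B. e \<subseteq> b)
     \<and> (\<forall>v i j l. i \<le> j \<and> j \<le> l \<and> l < length B \<and> v \<in> B ! i \<and> v \<in> B ! l \<longrightarrow> v \<in> B ! j)"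

definition pd_width :: "nat set list \<Rightarrow> nat" where
  "pd_width B = Max (card ` set B) - 1"

definition pathwidth :: "nat set \<Rightarrow> nat set set \<Rightarrow> nat" where
  "pathwidth V E = (LEAST w. \<exists>B. path_decomp V E B \<and> pd_width B = w)"

text \<open>Four disjoint sorts of variables, each indexed by nat: vertex object variables (VO),
 edge object variables (EO), vertex set variables (VS), edge set variables (ES).\<close>

datatype mso =
    Adj nat nat
  | EqV nat nat
  | EqE nat nat
  | InV nat nat
  | InE nat nat
  | Neg mso
  | Conj mso mso
  | ExVO nat mso
  | ExEO nat mso
  | ExVS nat mso
  | ExES nat mso

fun msize :: "mso \<Rightarrow> nat" where
  "msize (Adj _ _) = 3"
| "msize (EqV _ _) = 3"
| "msize (EqE _ _) = 3"
| "msize (InV _ _) = 3"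
| "msize (InE _ _) = 3"
| "msize (Neg p) = 1 + msize p"
| "msize (Conj p q) = 1 + msize p + msize q"
| "msize (ExVO _ p) = 1 + msize p"
| "msize (ExEO _ p) = 1 + msize p"
| "msize (ExVS _ p) = 1 + msize p"
| "msize (ExES _ p) = 1 + msize p"

fun fvo :: "mso \<Rightarrow> nat set" where
  "fvo (Adj x _) = {x}"
| "fvo (EqV x y) = {x, y}"
| "fvo (EqE _ _) = {}"
| "fvo (InV x _) = {x}"
| "fvo (InE _ _) = {}"
| "fvo (Neg p) = fvo p"
| "fvo (Conj p q) = fvo p \<union> fvo q"
| "fvo (ExVO x p) = fvo p - {x}"
| "fvo (ExEO _ p) = fvo p"
| "fvo (ExVS _ p) = fvo p"
| "fvo (ExES _ p) = fvo p"

fun feo :: "mso \<Rightarrow> nat set" where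
  "feo (Adj _ e) = {e}"
| "feo (EqV _ _) = {}"
| "feo (EqE x y) = {x, y}"
| "feo (InV _ _) = {}"
| "feo (InE x _) = {x}"
| "feo (Neg p) = feo p"
| "feo (Conj p q) = feo p \<union> feo q"
| "feo (ExVO _ p) = feo p"
| "feo (ExEO x p) = feo p - {x}"
| "feo (ExVS _ p) = feo p"
| "feo (ExES _ p) = feo p"

fun fvs :: "mso \<Rightarrow> nat set" where
  "fvs (Adj _ _) = {}"
| "fvs (EqV _ _) = {}"
| "fvs (EqE _ _) = {}"
| "fvs (InV _ X) = {X}"
| "fvs (InE _ _) = {}"
| "fvs (Neg p) = fvs p"
| "fvs (Conj p q) = fvs p \<union> fvs q"
| "fvs (ExVO _ p) = fvs p"
| "fvs (ExEO _ p) = fvs p"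
| "fvs (ExVS X p) = fvs p - {X}"
| "fvs (ExES _ p) = fvs p"

fun fes :: "mso \<Rightarrow> nat set" where
  "fes (Adj _ _) = {}"
| "fes (EqV _ _) = {}"
| "fes (EqE _ _) = {}"
| "fes (InV _ _) = {}"
| "fes (InE _ X) = {X}"
| "fes (Neg p) = fes p"
| "fes (Conj p q) = fes p \<union> fes q"
| "fes (ExVO _ p) = fes p"
| "fes (ExEO _ p) = fes p"
| "fes (ExVS _ p) = fes p"
| "fes (ExES X p) = fes p - {X}"

record asg =
  avo :: "nat \<Rightarrow> nat"
  aeo :: "nat \<Rightarrow> nat set"
  avs :: "nat \<Rightarrow> nat set"
  aes :: "nat \<Rightarrow> nat set set"

fun sat :: "nat set \<Rightarrow> nat set set \<Rightarrow> asg \<Rightarrow> mso \<Rightarrow> bool" where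
  "sat V E a (Adj x e) = (avo a x \<in> aeo a e)"
| "sat V E a (EqV x y) = (avo a x = avo a y)"
| "sat V E a (EqE x y) = (aeo a x = aeo a y)"
| "sat V E a (InV x X) = (avo a x \<in> avs a X)"
| "sat V E a (InE x X) = (aeo a x \<in> aes a X)"
| "sat V E a (Neg p) = (\<not> sat V E a p)"
| "sat V E a (Conj p q) = (sat V E a p \<and> sat V E a q)"
| "sat V E a (ExVO x p) = (\<exists>v\<in>V. sat V E (a\<lparr>avo := (avo a)(x := v)\<rparr>) p)"
| "sat V E a (ExEO x p) = (\<exists>e\<in>E. sat V E (a\<lparr>aeo := (aeo a)(x := e)\<rparr>) p)"
| "sat V E a (ExVS X p) = (\<exists>S\<subseteq>V. sat V E (a\<lparr>avs := (avs a)(X := S)\<rparr>) p)"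
| "sat V E a (ExES X p) = (\<exists>S\<subseteq>E. sat V E (a\<lparr>aes := (aes a)(X := S)\<rparr>) p)"

datatype dvar =
    DVO nat nat          \<comment> \<open>[x = v]\<close>
  | DEO nat "nat set"    \<comment> \<open>[x = e]\<close>
  | DVS nat nat          \<comment> \<open>[v \<in> X]\<close>
  | DES nat "nat set"    \<comment> \<open>[e \<in> X]\<close>

definition dvars :: "mso \<Rightarrow> nat set \<Rightarrow> nat set set \<Rightarrow> dvar set" where
  "dvars \<phi> V E =
     {DVO x v | x v. x \<in> fvo \<phi> \<and> v \<in> V} \<union> {DEO x e | x e. x \<in> feo \<phi> \<and> e \<in> E}
   \<union> {DVS X v | X v. X \<in> fvs \<phi> \<and> v \<in> V} \<union> {DES X e | X e. X \<in> fes \<phi> \<and> e \<in> E}"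

definition consistent :: "mso \<Rightarrow> nat set \<Rightarrow> nat set set \<Rightarrow> (dvar \<Rightarrow> bool) \<Rightarrow> bool" where
  "consistent \<phi> V E \<delta> \<longleftrightarrow>
     (\<forall>x\<in>fvo \<phi>. \<exists>!v. v \<in> V \<and> \<delta> (DVO x v)) \<and> (\<forall>x\<in>feo \<phi>. \<exists>!e. e \<in> E \<and> \<delta> (DEO x e))"

definition decode :: "nat set \<Rightarrow> nat set set \<Rightarrow> (dvar \<Rightarrow> bool) \<Rightarrow> asg" where
  "decode V E \<delta> = \<lparr> avo = (\<lambda>x. THE v. v \<in> V \<and> \<delta> (DVO x v)),
                    aeo = (\<lambda>x. THE e. e \<in> E \<and> \<delta> (DEO x e)),
                    avs = (\<lambda>X. {v \<in> V. \<delta> (DVS X v)}),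
                    aes = (\<lambda>X. {e \<in> E. \<delta> (DES X e)}) \<rparr>"

text \<open>F_{phi,G}: a Boolean function on the decision variables (total assignments are used;
  both sides only depend on the values at dvars phi V E).\<close>
definition Ffun :: "mso \<Rightarrow> nat set \<Rightarrow> nat set set \<Rightarrow> (dvar \<Rightarrow> bool) \<Rightarrow> bool" where
  "Ffun \<phi> V E \<delta> \<longleftrightarrow> consistent \<phi> V E \<delta> \<and> sat V E (decode V E \<delta>) \<phi>"

text \<open>A decision diagram is represented as a term; the DAG is obtained by maximal sharing,
  so its number of nodes is the number of distinct sub-diagrams.\<close>

datatype bdd = Leaf bool | Node dvar bdd bdd

fun beval :: "bdd \<Rightarrow> (dvar \<Rightarrow> bool) \<Rightarrow> bool" where
  "beval (Leaf b) \<delta> = b"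
| "beval (Node x lo hi) \<delta> = (if \<delta> x then beval hi \<delta> else beval lo \<delta>)"

fun bvars :: "bdd \<Rightarrow> dvar set" where
  "bvars (Leaf _) = {}"
| "bvars (Node x lo hi) = insert x (bvars lo \<union> bvars hi)"

fun bnodes :: "bdd \<Rightarrow> bdd set" where
  "bnodes (Leaf b) = {Leaf b}"
| "bnodes (Node x lo hi) = insert (Node x lo hi) (bnodes lo \<union> bnodes hi)"

fun bordered :: "dvar rel \<Rightarrow> bdd \<Rightarrow> bool" where
  "bordered r (Leaf _) = True"
| "bordered r (Node x lo hi) =
     ((\<forall>y \<in> bvars lo \<union> bvars hi. (x, y) \<in> r) \<and> bordered r lo \<and> bordered r hi)"

definition obdd_computes :: "dvar set \<Rightarrow> ((dvar \<Rightarrow> bool) \<Rightarrow> bool) \<Rightarrow> bdd \<Rightarrow> bool" where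
  "obdd_computes D F t \<longleftrightarrow>
     (\<exists>r. strict_linear_order_on D r \<and> bordered r t)
     \<and> bvars t \<subseteq> D \<and> (\<forall>\<delta>. beval t \<delta> = F \<delta>)"

end

(*
  Fix an optimal path decomposition and order the decision variables by their object (vertex
  or edge), objects being ordered by the first bag that contains them.  The OBDD is the decision
  tree for this order with equal subtrees shared, so its nodes at depth j are the cofactors of
  F obtained by fixing the first j variables, and its size is at most (|D| + 1) times the maximal
  number of cofactors on a level, where |D| <= |phi| * n.

  At depth j the fixed variables are those of all objects preceding the current one, which form
  the left side of a cut of the graph, plus at most |phi| variables of the current object.  The
  two sides of the cut only share the boundary vertices, i.e. the left vertices incident to
  right edges, and these all lie in one bag.  A cofactor at the cut is determined by which free
  object variables are already placed on the left and by the residual of phi: the function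
  mapping each assignment of the right side to the truth value of phi on the glued assignment.
  By induction on phi, the number of residuals is bounded by a tower of exponentials of height
  |phi| over the size of the boundary, so the number of cofactors on a level is bounded in
  terms of the width and |phi| alone.
*)

theory Submission
  imports Defs "HOL-Library.Product_Lexorder"
begin

section \<open>A computable size bound\<close>

lemma reval_RComp1: "reval g xs y \<Longrightarrow> reval f [y] z \<Longrightarrow> reval (RComp f [g]) xs z"
  by (rule reval.comp[where ys = "[y]"]) auto

lemma reval_RComp2:
  "reval g1 xs y1 \<Longrightarrow> reval g2 xs y2 \<Longrightarrow> reval f [y1, y2] z \<Longrightarrow> reval (RComp f [g1, g2]) xs z"
  by (rule reval.comp[where ys = "[y1, y2]"]) auto

lemma reval_RProj_nth: "i < length xs \<Longrightarrow> y = xs ! i \<Longrightarrow> reval (RProj i) xs y"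
  using reval.proj by blast

lemma reval_RS_eq: "y = Suc x \<Longrightarrow> reval RS [x] y"
  using reval.succ by blast

lemma reval_RZ_eq: "y = 0 \<Longrightarrow> reval RZ xs y"
  using reval.zero by blast

lemma reval_RPrec:
  assumes "reval f xs (F 0)" and "\<And>n. reval g (n # F n # xs) (F (Suc n))"
  shows "reval (RPrec f g) (n # xs) (F n)"
  by (induction n) (auto intro: reval.intros assms)

lemmas reval_basic = reval_RComp1 reval_RComp2 reval_RProj_nth reval_RS_eq reval_RZ_eq

definition r_add :: recf where
  "r_add = RPrec (RProj 0) (RComp RS [RProj 1])"

lemma reval_r_add: "z = x + y \<Longrightarrow> reval r_add [x, y] z"
  unfolding r_add_def
  by (simp, rule reval_RPrec[where F = "\<lambda>x. x + y", simplified]) (auto intro!: reval_basic)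

definition r_mult :: recf where
  "r_mult = RPrec RZ (RComp r_add [RProj 1, RProj 2])"

lemma reval_r_mult: "z = x * y \<Longrightarrow> reval r_mult [x, y] z"
  unfolding r_mult_def
  by (simp, rule reval_RPrec[where F = "\<lambda>x. x * y", simplified])
    (auto intro!: reval_basic reval_r_add)

definition r_pow2 :: recf where
  "r_pow2 = RPrec (RComp RS [RZ]) (RComp r_add [RProj 1, RProj 1])"

lemma reval_r_pow2: "z = 2 ^ x \<Longrightarrow> reval r_pow2 [x] z"
  unfolding r_pow2_def
  by (simp, rule reval_RPrec[where F = "\<lambda>x. 2 ^ x", simplified])
    (auto intro!: reval_basic reval_r_add)

fun tower :: "nat \<Rightarrow> nat \<Rightarrow> nat" where
  "tower b 0 = b + 3"
| "tower b (Suc s) = tower b s * 2 ^ tower b s"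

definition r_tower :: recf where
  "r_tower = RPrec (RComp RS [RComp RS [RComp RS [RProj 0]]])
                   (RComp r_mult [RProj 1, RComp r_pow2 [RProj 1]])"

lemma reval_r_tower: "z = tower b s \<Longrightarrow> reval r_tower [s, b] z"
  unfolding r_tower_def
  by (simp, rule reval_RPrec[where F = "tower b", simplified])
    (auto intro!: reval_basic reval_r_mult reval_r_pow2)

definition cofactor_bound :: "nat \<Rightarrow> nat \<Rightarrow> nat" where
  "cofactor_bound w m = 2 ^ m * (1 + 2 ^ m * tower (w + 1) m)"

definition obdd_factor :: "nat \<Rightarrow> nat" where
  "obdd_factor k = (k + 1) * cofactor_bound k k"

lemma computable_obdd_factor: "computable obdd_factor"
proof -
  define r where "r = RComp r_mult [RComp RS [RProj 0],
    RComp r_mult [RComp r_pow2 [RProj 0], RComp RS [RComp r_mult [RComp r_pow2 [RProj 0],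
      RComp r_tower [RProj 0, RComp RS [RProj 0]]]]]]"
  have "reval r [k] (obdd_factor k)" for k
    unfolding r_def obdd_factor_def cofactor_bound_def
    by (auto intro!: reval_basic reval_r_mult reval_r_pow2 reval_r_tower)
  then show ?thesis
    unfolding computable_def by blast
qed

definition card_le :: "'a set \<Rightarrow> nat \<Rightarrow> bool" where
  "card_le A n \<longleftrightarrow> finite A \<and> card A \<le> n"

lemma card_le_card: "finite A \<Longrightarrow> card_le A (card A)"
  by (simp add: card_le_def)

lemma card_le_mono: "card_le A m \<Longrightarrow> m \<le> n \<Longrightarrow> card_le A n"
  by (simp add: card_le_def)

lemma card_le_subset: "A \<subseteq> B \<Longrightarrow> card_le B n \<Longrightarrow> card_le A n"
  unfolding card_le_def by (meson card_mono finite_subset le_trans)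

lemma card_le_image: "card_le A n \<Longrightarrow> card_le (f ` A) n"
  unfolding card_le_def by (meson card_image_le finite_imageI le_trans)

lemma card_le_Un: "card_le A m \<Longrightarrow> card_le B n \<Longrightarrow> card_le (A \<union> B) (m + n)"
  unfolding card_le_def by (meson card_Un_le add_mono finite_UnI le_trans)

lemma card_le_insert: "card_le A n \<Longrightarrow> card_le (insert a A) (Suc n)"
  unfolding card_le_def by (simp add: card_insert_if)

lemma card_le_Times: "card_le A m \<Longrightarrow> card_le B n \<Longrightarrow> card_le (A \<times> B) (m * n)"
  unfolding card_le_def by (simp add: card_cartesian_product mult_le_mono)

lemma card_le_Pow: "card_le A n \<Longrightarrow> card_le (Pow A) (2 ^ n)"
  unfolding card_le_def by (simp add: card_Pow power_increasing)

lemma card_le_subset_image: "B \<subseteq> f ` A \<Longrightarrow> card_le A n \<Longrightarrow> card_le B n"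
  by (metis card_le_image card_le_subset)

lemma card_le_range_bool: "card_le (range (f :: bool \<Rightarrow> 'a)) 2"
  using card_le_image[OF card_le_card[of "UNIV :: bool set"]] by simp

lemma tower_pos: "0 < tower b s"
  by (induction s) auto

lemma tower_le_Suc: "tower b s \<le> tower b (Suc s)"
  and two_pow_tower_le_Suc: "2 ^ tower b s \<le> tower b (Suc s)"
  using tower_pos[of b s] by simp_all

lemma tower_ge: "b + 3 \<le> tower b s"
  by (induction s) (auto intro: le_trans[OF _ tower_le_Suc] simp del: tower.simps(2))

lemma tower_mono: "b \<le> b' \<Longrightarrow> s \<le> s' \<Longrightarrow> tower b s \<le> tower b' s'"
proof -
  assume "b \<le> b'" "s \<le> s'"
  have "tower b s \<le> tower b' s"
    using \<open>b \<le> b'\<close> by (induction s) (auto intro!: mult_le_mono power_increasing)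
  also have "\<dots> \<le> tower b' s'"
    using \<open>s \<le> s'\<close> by (rule lift_Suc_mono_le[of "tower b'", OF tower_le_Suc])
  finally show ?thesis .
qed

lemma card_le_Pow_tower: "card_le A (tower b s) \<Longrightarrow> card_le (Pow A) (tower b (Suc s))"
  using card_le_Pow card_le_mono two_pow_tower_le_Suc by blast

lemma card_le_Pow_Times_tower:
  "card_le A (tower b s) \<Longrightarrow> card_le (Pow A \<times> A) (tower b (Suc s))"
  using card_le_Times[OF card_le_Pow] by (fastforce intro: card_le_mono)

lemma card_le_Times_tower:
  assumes "card_le A (tower b s)" and "card_le B (tower b s)"
  shows "card_le (A \<times> B) (tower b (Suc s))"
proof -
  have "tower b s * tower b s \<le> tower b (Suc s)"
    using less_exp[of "tower b s"] by simp
  then show ?thesis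
    using card_le_Times[OF assms] by (rule card_le_mono[rotated])
qed

lemma cofactor_bound_mono: "w \<le> w' \<Longrightarrow> m \<le> m' \<Longrightarrow> cofactor_bound w m \<le> cofactor_bound w' m'"
  unfolding cofactor_bound_def by (intro mult_le_mono add_mono power_increasing tower_mono) auto

lemma two_le_cofactor_bound: "2 \<le> cofactor_bound w m"
proof -
  have "2 \<le> 1 + 2 ^ m * tower (w + 1) m"
    using tower_pos[of "w + 1" m] by (simp add: Suc_le_eq)
  then have "1 * 2 \<le> 2 ^ m * (1 + 2 ^ m * tower (w + 1) m)"
    by (intro mult_le_mono) simp_all
  then show ?thesis
    by (simp add: cofactor_bound_def)
qed

lemma obdd_size_le_obdd_factor:
  assumes "d \<le> m * n" and "1 \<le> n"
  shows "(d + 1) * cofactor_bound w m \<le> obdd_factor (w + m) * n"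
proof -
  have "d + 1 \<le> (m + 1) * n"
    using assms by simp
  also have "\<dots> \<le> (w + m + 1) * n"
    by simp
  finally have "d + 1 \<le> (w + m + 1) * n" .
  moreover have "cofactor_bound w m \<le> cofactor_bound (w + m) (w + m)"
    by (rule cofactor_bound_mono) auto
  ultimately have "(d + 1) * cofactor_bound w m \<le> (w + m + 1) * n * cofactor_bound (w + m) (w + m)"
    by (rule mult_le_mono)
  then show ?thesis
    by (simp add: obdd_factor_def algebra_simps)
qed

lemma range_subset_imageI: "(\<And>a. w a \<in> A \<and> f a = F (w a)) \<Longrightarrow> range f \<subseteq> F ` A"
  by blast

lemma ex_subset_split:
  "(\<exists>S \<subseteq> A. P S) \<longleftrightarrow> (\<exists>S1 \<subseteq> A \<inter> L. \<exists>S2 \<subseteq> A - L. P (S1 \<inter> L \<union> (S2 - L)))"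
proof
  assume "\<exists>S \<subseteq> A. P S"
  then obtain S where "S \<subseteq> A" "P S"
    by blast
  moreover have "S \<inter> L \<inter> L \<union> (S - L - L) = S"
    by blast
  ultimately show "\<exists>S1 \<subseteq> A \<inter> L. \<exists>S2 \<subseteq> A - L. P (S1 \<inter> L \<union> (S2 - L))"
    by (metis Diff_mono Int_mono order_refl)
next
  assume "\<exists>S1 \<subseteq> A \<inter> L. \<exists>S2 \<subseteq> A - L. P (S1 \<inter> L \<union> (S2 - L))"
  then obtain S1 S2 where "S1 \<subseteq> A \<inter> L" "S2 \<subseteq> A - L" "P (S1 \<inter> L \<union> (S2 - L))"
    by blast
  then show "\<exists>S \<subseteq> A. P S"
    by (intro exI[of _ "S1 \<inter> L \<union> (S2 - L)"]) auto
qed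

definition the_in :: "'a set \<Rightarrow> ('a \<Rightarrow> bool) \<Rightarrow> 'a \<Rightarrow> 'a" where
  "the_in A P d = (if \<exists>!v. v \<in> A \<and> P v then THE v. v \<in> A \<and> P v else d)"

lemma the_in_cong:
  assumes "A = B" and "\<And>v. v \<in> B \<Longrightarrow> P v = Q v"
  shows "the_in A P d = the_in B Q d"
proof -
  have "(\<lambda>v. v \<in> A \<and> P v) = (\<lambda>v. v \<in> B \<and> Q v)"
    using assms by auto
  then show ?thesis
    unfolding the_in_def by simp
qed

lemma the_in_eq:
  assumes "v \<in> A" "P v" "\<And>w. w \<in> A \<Longrightarrow> P w \<Longrightarrow> w = v"
  shows "the_in A P d = v"
proof -
  have "\<exists>!w. w \<in> A \<and> P w"
    using assms by blast
  moreover have "(THE w. w \<in> A \<and> P w) = v"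
    using assms by blast
  ultimately show ?thesis
    unfolding the_in_def by simp
qed

lemma the_in_in_insert: "the_in A P d \<in> insert d A"
proof (cases "\<exists>!v. v \<in> A \<and> P v")
  case True
  then have "(THE v. v \<in> A \<and> P v) \<in> A"
    by (rule theI'[THEN conjunct1])
  then show ?thesis
    using True by (simp add: the_in_def)
qed (simp add: the_in_def)

lemma the_eq_the_in_split:
  assumes "\<exists>!v. v \<in> U \<and> P v" and "L \<subseteq> U" and "dL \<notin> L"
  shows "(THE v. v \<in> U \<and> P v) =
    (if the_in L P dL \<in> L then the_in L P dL else the_in (U - L) P dR)"
proof -
  obtain v where v: "v \<in> U \<and> P v" and uniq: "\<forall>w. w \<in> U \<and> P w \<longrightarrow> w = v"
    using assms(1) by (rule ex1E)
  have the_v: "(THE v. v \<in> U \<and> P v) = v"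
    using v uniq by blast
  show ?thesis
  proof (cases "v \<in> L")
    case True
    then have "the_in L P dL = v"
      using v uniq assms(2) by (intro the_in_eq) blast+
    then show ?thesis
      using the_v True by simp
  next
    case False
    then have "\<not> (\<exists>w. w \<in> L \<and> P w)"
      using uniq assms(2) by blast
    then have "the_in L P dL = dL"
      unfolding the_in_def by auto
    moreover have "the_in (U - L) P dR = v"
      using v uniq False by (intro the_in_eq) blast+
    ultimately show ?thesis
      using the_v assms(3) by simp
  qed
qed

lemma ex1_override_split:
  assumes "L \<subseteq> U"
  shows "(\<exists>!v. v \<in> U \<and> (if v \<in> L then P v else Q v)) \<longleftrightarrow> (if \<exists>v\<in>L. P v
    then (\<exists>!v. v \<in> L \<and> P v) \<and> (\<forall>v\<in>U - L. \<not> Q v) else \<exists>!v. v \<in> U - L \<and> Q v)"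
proof (cases "\<exists>v\<in>L. P v")
  case True
  then obtain u where u: "u \<in> L" "P u"
    by blast
  have "(\<exists>!v. v \<in> U \<and> (if v \<in> L then P v else Q v)) \<longleftrightarrow>
      (\<forall>w\<in>U. (if w \<in> L then P w else Q w) \<longrightarrow> w = u)"
    using u assms by auto
  also have "\<dots> \<longleftrightarrow> (\<exists>!v. v \<in> L \<and> P v) \<and> (\<forall>v\<in>U - L. \<not> Q v)"
    using u assms by auto
  finally show ?thesis
    using True by simp
next
  case False
  then have "(\<lambda>v. v \<in> U \<and> (if v \<in> L then P v else Q v)) = (\<lambda>v. v \<in> U - L \<and> Q v)"
    by auto
  then show ?thesis
    using False by simp
qed

lemma sat_cong:
  assumes "\<forall>x\<in>fvo \<phi>. avo a x = avo a' x" "\<forall>x\<in>feo \<phi>. aeo a x = aeo a' x"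
    "\<forall>X\<in>fvs \<phi>. avs a X = avs a' X" "\<forall>X\<in>fes \<phi>. aes a X = aes a' X"
  shows "sat V E a \<phi> = sat V E a' \<phi>"
  using assms
proof (induction \<phi> arbitrary: a a')
  case (Conj p q)
  have "sat V E a p = sat V E a' p"
    by (rule Conj.IH(1)) (use Conj.prems in auto)
  moreover have "sat V E a q = sat V E a' q"
    by (rule Conj.IH(2)) (use Conj.prems in auto)
  ultimately show ?case by simp
next
  case (ExVO x \<phi>)
  then have "sat V E (a\<lparr>avo := (avo a)(x := v)\<rparr>) \<phi> = sat V E (a'\<lparr>avo := (avo a')(x := v)\<rparr>) \<phi>" for v
    by (intro ExVO.IH) auto
  then show ?case by simp
next
  case (ExEO x \<phi>)
  then have "sat V E (a\<lparr>aeo := (aeo a)(x := e)\<rparr>) \<phi> = sat V E (a'\<lparr>aeo := (aeo a')(x := e)\<rparr>) \<phi>" for e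
    by (intro ExEO.IH) auto
  then show ?case by simp
next
  case (ExVS X \<phi>)
  then have "sat V E (a\<lparr>avs := (avs a)(X := S)\<rparr>) \<phi> = sat V E (a'\<lparr>avs := (avs a')(X := S)\<rparr>) \<phi>" for S
    by (intro ExVS.IH) auto
  then show ?case by simp
next
  case (ExES X \<phi>)
  then have "sat V E (a\<lparr>aes := (aes a)(X := S)\<rparr>) \<phi> = sat V E (a'\<lparr>aes := (aes a')(X := S)\<rparr>) \<phi>" for S
    by (intro ExES.IH) auto
  then show ?case by simp
qed simp_all

lemma finite_free_vars: "finite (fvo \<phi>)" "finite (feo \<phi>)" "finite (fvs \<phi>)" "finite (fes \<phi>)"
  by (induction \<phi>) auto

lemma card_free_vars_le_msize:
  "card (fvo \<phi>) + card (feo \<phi>) + card (fvs \<phi>) + card (fes \<phi>) \<le> msize \<phi>"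
proof (induction \<phi>)
  case (Conj p q)
  then show ?case
    using card_Un_le[of "fvo p" "fvo q"] card_Un_le[of "feo p" "feo q"]
      card_Un_le[of "fvs p" "fvs q"] card_Un_le[of "fes p" "fes q"] by simp
next
  case (ExVO x p) then show ?case using card_Diff1_le[of "fvo p" x] by simp
next
  case (ExEO x p) then show ?case using card_Diff1_le[of "feo p" x] by simp
next
  case (ExVS X p) then show ?case using card_Diff1_le[of "fvs p" X] by simp
next
  case (ExES X p) then show ?case using card_Diff1_le[of "fes p" X] by simp
qed (simp_all add: card_insert_if)

lemma card_le_dvars:
  assumes "finite V" "finite E"
  shows "card_le (dvars \<phi> V E) (msize \<phi> * (card V + card E))"
proof -
  have "dvars \<phi> V E = case_prod DVO ` (fvo \<phi> \<times> V) \<union> case_prod DEO ` (feo \<phi> \<times> E)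
      \<union> case_prod DVS ` (fvs \<phi> \<times> V) \<union> case_prod DES ` (fes \<phi> \<times> E)"
    by (auto simp: dvars_def)
  moreover have "card_le \<dots> (card (fvo \<phi>) * card V + card (feo \<phi>) * card E
      + card (fvs \<phi>) * card V + card (fes \<phi>) * card E)"
    using assms finite_free_vars[of \<phi>]
    by (intro card_le_Un card_le_image card_le_Times card_le_card) auto
  moreover have "card (fvo \<phi>) * card V + card (feo \<phi>) * card E
      + card (fvs \<phi>) * card V + card (fes \<phi>) * card E \<le> msize \<phi> * (card V + card E)"
  proof -
    have "(card (fvo \<phi>) + card (fvs \<phi>)) * card V \<le> msize \<phi> * card V"
      "(card (feo \<phi>) + card (fes \<phi>)) * card E \<le> msize \<phi> * card E"
      using card_free_vars_le_msize[of \<phi>] by (intro mult_le_mono1; linarith)+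
    then show ?thesis
      unfolding add_mult_distrib add_mult_distrib2 by linarith
  qed
  ultimately show ?thesis by (auto intro: card_le_mono)
qed

lemma Ffun_cong:
  assumes "\<forall>d\<in>dvars \<phi> V E. \<delta> d = \<delta>' d"
  shows "Ffun \<phi> V E \<delta> = Ffun \<phi> V E \<delta>'"
proof -
  have VO: "(\<lambda>v. v \<in> V \<and> \<delta> (DVO x v)) = (\<lambda>v. v \<in> V \<and> \<delta>' (DVO x v))" if "x \<in> fvo \<phi>" for x
    using assms that by (auto simp: dvars_def)
  have EO: "(\<lambda>e. e \<in> E \<and> \<delta> (DEO x e)) = (\<lambda>e. e \<in> E \<and> \<delta>' (DEO x e))" if "x \<in> feo \<phi>" for x
    using assms that by (auto simp: dvars_def)
  have "consistent \<phi> V E \<delta> = consistent \<phi> V E \<delta>'"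
    unfolding consistent_def using VO EO by simp
  moreover have "sat V E (decode V E \<delta>) \<phi> = sat V E (decode V E \<delta>') \<phi>"
    by (rule sat_cong) (use VO EO assms in \<open>auto simp: decode_def dvars_def\<close>)
  ultimately show ?thesis
    unfolding Ffun_def by simp
qed

section \<open>Decision trees and their cofactors\<close>

fun decision_tree :: "dvar list \<Rightarrow> ((dvar \<Rightarrow> bool) \<Rightarrow> bool) \<Rightarrow> bdd" where
  "decision_tree [] F = Leaf (F (\<lambda>_. False))"
| "decision_tree (d # ds) F =
     Node d (decision_tree ds (\<lambda>\<sigma>. F (\<sigma>(d := False)))) (decision_tree ds (\<lambda>\<sigma>. F (\<sigma>(d := True))))"

lemma beval_decision_tree:
  "(\<And>\<sigma> \<sigma>'. \<forall>d\<in>set ds. \<sigma> d = \<sigma>' d \<Longrightarrow> F \<sigma> = F \<sigma>') \<Longrightarrow> beval (decision_tree ds F) \<sigma> = F \<sigma>"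
proof (induction ds arbitrary: F \<sigma>)
  case Nil
  then show ?case by simp
next
  case (Cons d ds)
  have "beval (decision_tree ds (\<lambda>\<sigma>. F (\<sigma>(d := b)))) \<sigma> = F (\<sigma>(d := b))" for b
    by (rule Cons.IH) (use Cons.prems in auto)
  then show ?case
    by (cases "\<sigma> d") (simp_all add: fun_upd_idem)
qed

lemma bvars_decision_tree: "bvars (decision_tree ds F) \<subseteq> set ds"
  by (induction ds arbitrary: F) auto

fun list_order :: "'a list \<Rightarrow> 'a rel" where
  "list_order [] = {}"
| "list_order (d # ds) = {d} \<times> set ds \<union> list_order ds"

lemma list_order_subset: "list_order ds \<subseteq> set ds \<times> set ds"
  by (induction ds) auto

lemma strict_linear_order_on_list_order:
  "distinct ds \<Longrightarrow> strict_linear_order_on (set ds) (list_order ds)"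
proof (induction ds)
  case (Cons d ds)
  then have "trans (list_order ds)" "irrefl (list_order ds)" "total_on (set ds) (list_order ds)"
    and "d \<notin> set ds"
    by (auto simp: strict_linear_order_on_def)
  with list_order_subset[of ds] show ?case
    by (auto simp: strict_linear_order_on_def trans_def irrefl_on_def total_on_def)
qed (simp add: strict_linear_order_on_def trans_def irrefl_on_def total_on_def)

lemma bordered_mono: "bordered r t \<Longrightarrow> r \<subseteq> r' \<Longrightarrow> bordered r' t"
  by (induction t) auto

lemma bordered_decision_tree: "bordered (list_order ds) (decision_tree ds F)"
proof (induction ds arbitrary: F)
  case (Cons d ds)
  have "list_order ds \<subseteq> list_order (d # ds)"
    by auto
  then show ?case
    using Cons bvars_decision_tree[of ds] by (auto intro: bordered_mono)
qed simp

lemma obdd_computes_decision_tree: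
  assumes "distinct ds" and "set ds = D" and "\<And>\<sigma> \<sigma>'. \<forall>d\<in>D. \<sigma> d = \<sigma>' d \<Longrightarrow> F \<sigma> = F \<sigma>'"
  shows "obdd_computes D F (decision_tree ds F)"
  unfolding obdd_computes_def
proof (intro conjI exI allI)
  show "strict_linear_order_on D (list_order ds)"
    using assms(1,2) strict_linear_order_on_list_order by blast
  show "bvars (decision_tree ds F) \<subseteq> D"
    using assms(2) bvars_decision_tree by blast
  show "beval (decision_tree ds F) \<delta> = F \<delta>" for \<delta>
    using assms(2,3) by (intro beval_decision_tree) auto
qed (rule bordered_decision_tree)

definition cofactors :: "((dvar \<Rightarrow> bool) \<Rightarrow> bool) \<Rightarrow> dvar set \<Rightarrow> ((dvar \<Rightarrow> bool) \<Rightarrow> bool) set" where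
  "cofactors F S = range (\<lambda>\<delta> \<sigma>. F (override_on \<sigma> \<delta> S))"

lemma self_in_cofactors_empty: "F \<in> cofactors F {}"
  unfolding cofactors_def by auto

lemma card_le_cofactors_Un:
  assumes "card_le (cofactors F A) c" and "finite Q"
  shows "card_le (cofactors F (A \<union> Q)) (c * 2 ^ card Q)"
proof -
  let ?G = "\<lambda>(g, S) \<sigma>. g (override_on \<sigma> (\<lambda>d. d \<in> S) Q)"
  have "cofactors F (A \<union> Q) \<subseteq> ?G ` (cofactors F A \<times> Pow Q)"
  proof
    fix h
    assume "h \<in> cofactors F (A \<union> Q)"
    then obtain \<delta> where h: "h = (\<lambda>\<sigma>. F (override_on \<sigma> \<delta> (A \<union> Q)))"
      by (auto simp: cofactors_def)
    have "override_on \<sigma> \<delta> (A \<union> Q) = override_on (override_on \<sigma> (\<lambda>d. d \<in> {d \<in> Q. \<delta> d}) Q) \<delta> A"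
      for \<sigma>
      by (auto simp: override_on_def)
    then have "h = ?G (\<lambda>\<sigma>. F (override_on \<sigma> \<delta> A), {d \<in> Q. \<delta> d})"
      by (simp add: h)
    then show "h \<in> ?G ` (cofactors F A \<times> Pow Q)"
      by (rule image_eqI) (auto simp: cofactors_def)
  qed
  moreover have "card_le (cofactors F A \<times> Pow Q) (c * 2 ^ card Q)"
    using assms by (intro card_le_Times card_le_Pow card_le_card)
  ultimately show ?thesis
    by (rule card_le_subset_image)
qed

lemma card_le_cofactors_determined:
  assumes "\<And>\<sigma> \<sigma>'. \<forall>d\<in>S. \<sigma> d = \<sigma>' d \<Longrightarrow> F \<sigma> = F \<sigma>'"
  shows "card_le (cofactors F S) 2"
proof -
  have "(\<lambda>\<sigma>. F (override_on \<sigma> \<delta> S)) = (\<lambda>_. F \<delta>)" for \<delta>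
    by (rule ext, rule assms) simp
  then have "cofactors F S \<subseteq> range (\<lambda>b (\<sigma> :: dvar \<Rightarrow> bool). b)"
    unfolding cofactors_def by auto
  then show ?thesis
    using card_le_range_bool by (rule card_le_subset)
qed

lemma cofactor_update_in_cofactors:
  assumes "distinct ds" "i < length ds" "h \<in> cofactors F (set (take i ds))"
  shows "(\<lambda>\<sigma>. h (\<sigma>(ds ! i := b))) \<in> cofactors F (set (take (Suc i) ds))"
proof -
  obtain \<delta> where h: "h = (\<lambda>\<sigma>. F (override_on \<sigma> \<delta> (set (take i ds))))"
    using assms(3) by (auto simp: cofactors_def)
  have "ds ! i \<in> set (drop i ds)"
    using assms(2) by (metis Cons_nth_drop_Suc list.set_intros(1))
  then have "ds ! i \<notin> set (take i ds)"
    using set_take_disj_set_drop_if_distinct[OF assms(1) order_refl] by blast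
  moreover have "set (take (Suc i) ds) = insert (ds ! i) (set (take i ds))"
    using assms(2) by (simp add: take_Suc_conv_app_nth)
  ultimately have "override_on (\<sigma>(ds ! i := b)) \<delta> (set (take i ds)) =
      override_on \<sigma> (\<delta>(ds ! i := b)) (set (take (Suc i) ds))" for \<sigma>
    by (auto simp: override_on_def)
  then show ?thesis
    unfolding h cofactors_def by auto
qed

lemma bnodes_decision_tree_subset:
  assumes "distinct ds" "i \<le> length ds" "h \<in> cofactors F (set (take i ds))"
  shows "bnodes (decision_tree (drop i ds) h)
    \<subseteq> (\<Union>j\<in>{i..length ds}. decision_tree (drop j ds) ` cofactors F (set (take j ds)))"
  using assms(2,3)
proof (induction "length ds - i" arbitrary: i h)
  case 0
  then have "i = length ds"
    by simp
  then show ?case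
    using 0 by auto
next
  case (Suc n)
  then have i: "i < length ds"
    by simp
  let ?U = "\<lambda>k. \<Union>j\<in>{k..length ds}. decision_tree (drop j ds) ` cofactors F (set (take j ds))"
  have drop_i: "drop i ds = ds ! i # drop (Suc i) ds"
    using i by (rule Cons_nth_drop_Suc[symmetric])
  have children: "bnodes (decision_tree (drop (Suc i) ds) (\<lambda>\<sigma>. h (\<sigma>(ds ! i := b)))) \<subseteq> ?U i" for b
  proof -
    have "bnodes (decision_tree (drop (Suc i) ds) (\<lambda>\<sigma>. h (\<sigma>(ds ! i := b)))) \<subseteq> ?U (Suc i)"
      using Suc.hyps(1)[of "Suc i"] Suc.hyps(2) i
        cofactor_update_in_cofactors[OF assms(1) i Suc.prems(2)] by simp
    also have "?U (Suc i) \<subseteq> ?U i"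
      by (intro UN_mono) auto
    finally show ?thesis .
  qed
  have root: "decision_tree (drop i ds) h \<in> ?U i"
    using Suc.prems i by auto
  have "bnodes (decision_tree (drop i ds) h) = insert (decision_tree (drop i ds) h)
      (bnodes (decision_tree (drop (Suc i) ds) (\<lambda>\<sigma>. h (\<sigma>(ds ! i := False))))
       \<union> bnodes (decision_tree (drop (Suc i) ds) (\<lambda>\<sigma>. h (\<sigma>(ds ! i := True)))))"
    by (simp add: drop_i)
  then show ?case
    using root children[of False] children[of True] by (simp only: insert_subset Un_least)
qed

lemma card_bnodes_decision_tree:
  assumes "distinct ds" and "\<And>j. j \<le> length ds \<Longrightarrow> card_le (cofactors F (set (take j ds))) R"
  shows "card (bnodes (decision_tree ds F)) \<le> (length ds + 1) * R"
proof -
  let ?U = "\<Union>j\<in>{0..length ds}. decision_tree (drop j ds) ` cofactors F (set (take j ds))"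
  have "finite ?U"
    using assms(2) by (auto simp: card_le_def)
  moreover have "card ?U \<le> (length ds + 1) * R"
  proof -
    have "card ?U \<le> (\<Sum>j\<in>{0..length ds}. card (decision_tree (drop j ds) ` cofactors F (set (take j ds))))"
      by (rule card_UN_le) simp
    also have "\<dots> \<le> (\<Sum>j\<in>{0..length ds}. R)"
      using assms(2) card_le_image by (intro sum_mono) (auto simp: card_le_def)
    finally show ?thesis
      by simp
  qed
  moreover have "bnodes (decision_tree ds F) \<subseteq> ?U"
    using bnodes_decision_tree_subset[OF assms(1), of 0 F] self_in_cofactors_empty by simp
  ultimately show ?thesis
    by (meson card_mono le_trans)
qed

section \<open>Residuals of a formula across a cut\<close>

locale graph_cut =
  fixes V :: "nat set" and E :: "nat set set" and VL :: "nat set" and EL :: "nat set set"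
    and BV :: "nat set"
  assumes left_edge_subset: "e \<in> EL \<Longrightarrow> e \<subseteq> VL"
    and crossing_edge_boundary: "e \<in> E - EL \<Longrightarrow> e \<inter> VL \<subseteq> BV"
    and finite_boundary: "finite BV"
begin

definition glue :: "asg \<Rightarrow> asg \<Rightarrow> asg" where
  "glue \<alpha> \<beta> = \<lparr> avo = (\<lambda>x. if avo \<alpha> x \<in> VL then avo \<alpha> x else avo \<beta> x),
                 aeo = (\<lambda>x. if aeo \<alpha> x \<in> EL then aeo \<alpha> x else aeo \<beta> x),
                 avs = (\<lambda>X. (avs \<alpha> X \<inter> VL) \<union> (avs \<beta> X - VL)),
                 aes = (\<lambda>X. (aes \<alpha> X \<inter> EL) \<union> (aes \<beta> X - EL)) \<rparr>"

definition right_asg :: "asg \<Rightarrow> bool" where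
  "right_asg \<beta> \<longleftrightarrow> (\<forall>x. avo \<beta> x \<notin> VL) \<and> (\<forall>x. aeo \<beta> x \<notin> EL \<and> aeo \<beta> x \<inter> VL \<subseteq> BV)"

text \<open>\<open>residual \<psi> \<alpha>\<close> plays the role of the Myhill-Nerode class of the left assignment \<open>\<alpha>\<close>.\<close>

definition residual :: "mso \<Rightarrow> asg \<Rightarrow> asg \<Rightarrow> bool" where
  "residual \<psi> \<alpha> = (\<lambda>\<beta>. right_asg \<beta> \<and> sat V E (glue \<alpha> \<beta>) \<psi>)"

lemma card_le_range_residual_atom:
  assumes "\<And>\<alpha>. residual \<psi> \<alpha> \<in> insert (\<lambda>\<beta>. right_asg \<beta> \<and> P \<beta>) (range (\<lambda>c \<beta>. right_asg \<beta> \<and> c))"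
  shows "card_le (range (residual \<psi>)) (tower (card BV) s)"
proof -
  have "card_le (insert (\<lambda>\<beta>. right_asg \<beta> \<and> P \<beta>) (range (\<lambda>c \<beta>. right_asg \<beta> \<and> c))) 3"
    using card_le_insert[OF card_le_range_bool] by (simp add: numeral_3_eq_3)
  then have "card_le (range (residual \<psi>)) 3"
    using assms by (elim card_le_subset[rotated]) blast
  then show ?thesis
    using tower_ge[of "card BV" s] by (elim card_le_mono) simp
qed

lemma residual_Adj:
  "residual (Adj x e) \<alpha> =
    (if avo \<alpha> x \<in> VL then
       if aeo \<alpha> e \<in> EL then (\<lambda>\<beta>. right_asg \<beta> \<and> avo \<alpha> x \<in> aeo \<alpha> e)
       else if avo \<alpha> x \<in> BV then (\<lambda>\<beta>. right_asg \<beta> \<and> avo \<alpha> x \<in> aeo \<beta> e)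
       else (\<lambda>\<beta>. right_asg \<beta> \<and> False)
     else if aeo \<alpha> e \<in> EL then (\<lambda>\<beta>. right_asg \<beta> \<and> False)
     else (\<lambda>\<beta>. right_asg \<beta> \<and> avo \<beta> x \<in> aeo \<beta> e))"
  using left_edge_subset by (auto simp: fun_eq_iff residual_def glue_def right_asg_def)

lemma card_le_range_residual_Adj: "card_le (range (residual (Adj x e))) (tower (card BV) s)"
proof -
  let ?S = "insert (\<lambda>\<beta>. right_asg \<beta> \<and> avo \<beta> x \<in> aeo \<beta> e) (range (\<lambda>c \<beta>. right_asg \<beta> \<and> c))
    \<union> (\<lambda>v \<beta>. right_asg \<beta> \<and> v \<in> aeo \<beta> e) ` BV"
  have "range (residual (Adj x e)) \<subseteq> ?S"
    unfolding residual_Adj by auto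
  moreover have "card_le ?S (Suc 2 + card BV)"
    using finite_boundary
    by (intro card_le_Un card_le_insert card_le_range_bool card_le_image card_le_card)
  moreover have "Suc 2 + card BV \<le> tower (card BV) s"
    using tower_ge[of "card BV" s] by simp
  ultimately show ?thesis
    by (meson card_le_mono card_le_subset)
qed

lemma residual_EqV:
  "residual (EqV x y) \<alpha> =
    (if avo \<alpha> x \<in> VL \<and> avo \<alpha> y \<in> VL then (\<lambda>\<beta>. right_asg \<beta> \<and> avo \<alpha> x = avo \<alpha> y)
     else if avo \<alpha> x \<in> VL \<or> avo \<alpha> y \<in> VL then (\<lambda>\<beta>. right_asg \<beta> \<and> False)
     else (\<lambda>\<beta>. right_asg \<beta> \<and> avo \<beta> x = avo \<beta> y))"
  by (auto simp: fun_eq_iff residual_def glue_def right_asg_def; metis)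

lemma residual_EqE:
  "residual (EqE x y) \<alpha> =
    (if aeo \<alpha> x \<in> EL \<and> aeo \<alpha> y \<in> EL then (\<lambda>\<beta>. right_asg \<beta> \<and> aeo \<alpha> x = aeo \<alpha> y)
     else if aeo \<alpha> x \<in> EL \<or> aeo \<alpha> y \<in> EL then (\<lambda>\<beta>. right_asg \<beta> \<and> False)
     else (\<lambda>\<beta>. right_asg \<beta> \<and> aeo \<beta> x = aeo \<beta> y))"
  by (auto simp: fun_eq_iff residual_def glue_def right_asg_def; metis)

lemma residual_InV:
  "residual (InV x X) \<alpha> =
    (if avo \<alpha> x \<in> VL then (\<lambda>\<beta>. right_asg \<beta> \<and> avo \<alpha> x \<in> avs \<alpha> X)
     else (\<lambda>\<beta>. right_asg \<beta> \<and> avo \<beta> x \<in> avs \<beta> X))"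
  by (auto simp: fun_eq_iff residual_def glue_def right_asg_def)

lemma residual_InE:
  "residual (InE x X) \<alpha> =
    (if aeo \<alpha> x \<in> EL then (\<lambda>\<beta>. right_asg \<beta> \<and> aeo \<alpha> x \<in> aes \<alpha> X)
     else (\<lambda>\<beta>. right_asg \<beta> \<and> aeo \<beta> x \<in> aes \<beta> X))"
  by (auto simp: fun_eq_iff residual_def glue_def right_asg_def)

lemma range_residual_Neg:
  "range (residual (Neg \<psi>)) \<subseteq> (\<lambda>h \<beta>. right_asg \<beta> \<and> \<not> h \<beta>) ` range (residual \<psi>)"
  by (auto simp: residual_def image_iff fun_eq_iff)

lemma range_residual_Conj:
  "range (residual (Conj \<psi>1 \<psi>2))
    \<subseteq> (\<lambda>(h1, h2) \<beta>. h1 \<beta> \<and> h2 \<beta>) ` (range (residual \<psi>1) \<times> range (residual \<psi>2))"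
proof -
  have "residual (Conj \<psi>1 \<psi>2) \<alpha> = (\<lambda>(h1, h2) \<beta>. h1 \<beta> \<and> h2 \<beta>) (residual \<psi>1 \<alpha>, residual \<psi>2 \<alpha>)" for \<alpha>
    by (auto simp: residual_def)
  then show ?thesis by blast
qed

lemma right_asg_update_avo: "right_asg \<beta> \<Longrightarrow> v \<notin> VL \<Longrightarrow> right_asg (\<beta>\<lparr>avo := (avo \<beta>)(x := v)\<rparr>)"
  by (simp add: right_asg_def)

lemma right_asg_update_aeo:
  "right_asg \<beta> \<Longrightarrow> e \<in> E - EL \<Longrightarrow> right_asg (\<beta>\<lparr>aeo := (aeo \<beta>)(x := e)\<rparr>)"
  using crossing_edge_boundary by (simp add: right_asg_def)

text \<open>The left value of \<open>x\<close> is irrelevant once it lies outside \<open>VL\<close>, so a single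
  representative \<open>SOME v. v \<in> V - VL\<close> covers all right witnesses.\<close>

lemma residual_ExVO:
  fixes x :: nat and \<alpha> :: asg
  defines "upd \<equiv> \<lambda>a v. a\<lparr>avo := (avo a)(x := v)\<rparr>"
  shows "residual (ExVO x \<psi>) \<alpha> = (\<lambda>\<beta>. right_asg \<beta> \<and>
    ((\<exists>h \<in> (\<lambda>v. residual \<psi> (upd \<alpha> v)) ` (V \<inter> VL). h \<beta>)
     \<or> (\<exists>v \<in> V - VL. residual \<psi> (upd \<alpha> (SOME v. v \<in> V - VL)) (upd \<beta> v))))"
proof (rule ext)
  fix \<beta>
  let ?g = "glue \<alpha> \<beta>"
  have left: "glue (upd \<alpha> v) \<beta> = upd ?g v" if "v \<in> VL" for v
    using that by (auto simp: upd_def glue_def fun_eq_iff)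
  have right: "glue (upd \<alpha> w) (upd \<beta> v) = upd ?g v" if "v \<notin> VL" "w \<notin> VL" for v w
    using that by (auto simp: upd_def glue_def fun_eq_iff)
  show "residual (ExVO x \<psi>) \<alpha> \<beta> = (right_asg \<beta> \<and>
    ((\<exists>h \<in> (\<lambda>v. residual \<psi> (upd \<alpha> v)) ` (V \<inter> VL). h \<beta>)
     \<or> (\<exists>v \<in> V - VL. residual \<psi> (upd \<alpha> (SOME v. v \<in> V - VL)) (upd \<beta> v))))"
  proof (cases "right_asg \<beta>")
    case True
    have "sat V E ?g (ExVO x \<psi>) \<longleftrightarrow>
        (\<exists>v \<in> V \<inter> VL. sat V E (upd ?g v) \<psi>) \<or> (\<exists>v \<in> V - VL. sat V E (upd ?g v) \<psi>)"
      by (auto simp: upd_def)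
    also have "(\<exists>v \<in> V - VL. sat V E (upd ?g v) \<psi>) \<longleftrightarrow>
        (\<exists>v \<in> V - VL. residual \<psi> (upd \<alpha> (SOME v. v \<in> V - VL)) (upd \<beta> v))"
    proof (cases "V - VL = {}")
      case False
      then have "(SOME v. v \<in> V - VL) \<notin> VL"
        by (metis Diff_iff some_in_eq)
      then show ?thesis
        using right True right_asg_update_avo by (auto simp: residual_def upd_def)
    qed auto
    finally show ?thesis
      using True left by (auto simp: residual_def)
  qed (simp add: residual_def)
qed

lemma residual_ExEO:
  fixes x :: nat and \<alpha> :: asg
  defines "upd \<equiv> \<lambda>a e. a\<lparr>aeo := (aeo a)(x := e)\<rparr>"
  shows "residual (ExEO x \<psi>) \<alpha> = (\<lambda>\<beta>. right_asg \<beta> \<and>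
    ((\<exists>h \<in> (\<lambda>e. residual \<psi> (upd \<alpha> e)) ` (E \<inter> EL). h \<beta>)
     \<or> (\<exists>e \<in> E - EL. residual \<psi> (upd \<alpha> (SOME e. e \<in> E - EL)) (upd \<beta> e))))"
proof (rule ext)
  fix \<beta>
  let ?g = "glue \<alpha> \<beta>"
  have left: "glue (upd \<alpha> e) \<beta> = upd ?g e" if "e \<in> EL" for e
    using that by (auto simp: upd_def glue_def fun_eq_iff)
  have right: "glue (upd \<alpha> e') (upd \<beta> e) = upd ?g e" if "e \<notin> EL" "e' \<notin> EL" for e e'
    using that by (auto simp: upd_def glue_def fun_eq_iff)
  show "residual (ExEO x \<psi>) \<alpha> \<beta> = (right_asg \<beta> \<and>
    ((\<exists>h \<in> (\<lambda>e. residual \<psi> (upd \<alpha> e)) ` (E \<inter> EL). h \<beta>)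
     \<or> (\<exists>e \<in> E - EL. residual \<psi> (upd \<alpha> (SOME e. e \<in> E - EL)) (upd \<beta> e))))"
  proof (cases "right_asg \<beta>")
    case True
    have "sat V E ?g (ExEO x \<psi>) \<longleftrightarrow>
        (\<exists>e \<in> E \<inter> EL. sat V E (upd ?g e) \<psi>) \<or> (\<exists>e \<in> E - EL. sat V E (upd ?g e) \<psi>)"
      by (auto simp: upd_def)
    also have "(\<exists>e \<in> E - EL. sat V E (upd ?g e) \<psi>) \<longleftrightarrow>
        (\<exists>e \<in> E - EL. residual \<psi> (upd \<alpha> (SOME e. e \<in> E - EL)) (upd \<beta> e))"
    proof (cases "E - EL = {}")
      case False
      then have "(SOME e. e \<in> E - EL) \<notin> EL"
        by (metis Diff_iff some_in_eq)
      then show ?thesis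
        using right True right_asg_update_aeo by (auto simp: residual_def upd_def)
    qed auto
    finally show ?thesis
      using True left by (auto simp: residual_def)
  qed (simp add: residual_def)
qed

lemma residual_ExVS:
  fixes X :: nat and \<alpha> :: asg
  defines "upd \<equiv> \<lambda>a S. a\<lparr>avs := (avs a)(X := S)\<rparr>"
  shows "residual (ExVS X \<psi>) \<alpha> = (\<lambda>\<beta>. right_asg \<beta> \<and>
    (\<exists>h \<in> (\<lambda>S. residual \<psi> (upd \<alpha> S)) ` Pow (V \<inter> VL). \<exists>S \<subseteq> V - VL. h (upd \<beta> S)))"
proof (rule ext)
  fix \<beta>
  let ?g = "glue \<alpha> \<beta>"
  have glue_upd: "glue (upd \<alpha> S1) (upd \<beta> S2) = upd ?g (S1 \<inter> VL \<union> (S2 - VL))" for S1 S2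
    by (auto simp: upd_def glue_def fun_eq_iff)
  have right_upd: "right_asg (upd \<beta> S) = right_asg \<beta>" for S
    by (simp add: upd_def right_asg_def)
  have "residual (ExVS X \<psi>) \<alpha> \<beta> \<longleftrightarrow> right_asg \<beta> \<and> (\<exists>S \<subseteq> V. sat V E (upd ?g S) \<psi>)"
    by (simp add: residual_def upd_def)
  also have "\<dots> \<longleftrightarrow> right_asg \<beta> \<and>
      (\<exists>S1 \<subseteq> V \<inter> VL. \<exists>S2 \<subseteq> V - VL. sat V E (upd ?g (S1 \<inter> VL \<union> (S2 - VL))) \<psi>)"
    by (rule conj_cong[OF refl ex_subset_split])
  also have "\<dots> \<longleftrightarrow> right_asg \<beta> \<and>
      (\<exists>h \<in> (\<lambda>S. residual \<psi> (upd \<alpha> S)) ` Pow (V \<inter> VL). \<exists>S \<subseteq> V - VL. h (upd \<beta> S))"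
    by (auto simp: residual_def glue_upd right_upd)
  finally show "residual (ExVS X \<psi>) \<alpha> \<beta> = (right_asg \<beta> \<and>
    (\<exists>h \<in> (\<lambda>S. residual \<psi> (upd \<alpha> S)) ` Pow (V \<inter> VL). \<exists>S \<subseteq> V - VL. h (upd \<beta> S)))" .
qed

lemma residual_ExES:
  fixes X :: nat and \<alpha> :: asg
  defines "upd \<equiv> \<lambda>a S. a\<lparr>aes := (aes a)(X := S)\<rparr>"
  shows "residual (ExES X \<psi>) \<alpha> = (\<lambda>\<beta>. right_asg \<beta> \<and>
    (\<exists>h \<in> (\<lambda>S. residual \<psi> (upd \<alpha> S)) ` Pow (E \<inter> EL). \<exists>S \<subseteq> E - EL. h (upd \<beta> S)))"
proof (rule ext)
  fix \<beta>
  let ?g = "glue \<alpha> \<beta>"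
  have glue_upd: "glue (upd \<alpha> S1) (upd \<beta> S2) = upd ?g (S1 \<inter> EL \<union> (S2 - EL))" for S1 S2
    by (auto simp: upd_def glue_def fun_eq_iff)
  have right_upd: "right_asg (upd \<beta> S) = right_asg \<beta>" for S
    by (simp add: upd_def right_asg_def)
  have "residual (ExES X \<psi>) \<alpha> \<beta> \<longleftrightarrow> right_asg \<beta> \<and> (\<exists>S \<subseteq> E. sat V E (upd ?g S) \<psi>)"
    by (simp add: residual_def upd_def)
  also have "\<dots> \<longleftrightarrow> right_asg \<beta> \<and>
      (\<exists>S1 \<subseteq> E \<inter> EL. \<exists>S2 \<subseteq> E - EL. sat V E (upd ?g (S1 \<inter> EL \<union> (S2 - EL))) \<psi>)"
    by (rule conj_cong[OF refl ex_subset_split])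
  also have "\<dots> \<longleftrightarrow> right_asg \<beta> \<and>
      (\<exists>h \<in> (\<lambda>S. residual \<psi> (upd \<alpha> S)) ` Pow (E \<inter> EL). \<exists>S \<subseteq> E - EL. h (upd \<beta> S))"
    by (auto simp: residual_def glue_upd right_upd)
  finally show "residual (ExES X \<psi>) \<alpha> \<beta> = (right_asg \<beta> \<and>
    (\<exists>h \<in> (\<lambda>S. residual \<psi> (upd \<alpha> S)) ` Pow (E \<inter> EL). \<exists>S \<subseteq> E - EL. h (upd \<beta> S)))" .
qed

lemma range_residual_ExVO:
  "range (residual (ExVO x \<psi>)) \<subseteq> (\<lambda>(H, h0) \<beta>. right_asg \<beta> \<and>
      ((\<exists>h\<in>H. h \<beta>) \<or> (\<exists>v\<in>V - VL. h0 (\<beta>\<lparr>avo := (avo \<beta>)(x := v)\<rparr>))))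
    ` (Pow (range (residual \<psi>)) \<times> range (residual \<psi>))"
  by (rule range_subset_imageI[where w = "\<lambda>\<alpha>.
      ((\<lambda>v. residual \<psi> (\<alpha>\<lparr>avo := (avo \<alpha>)(x := v)\<rparr>)) ` (V \<inter> VL),
       residual \<psi> (\<alpha>\<lparr>avo := (avo \<alpha>)(x := SOME v. v \<in> V - VL)\<rparr>))"])
    (auto simp: residual_ExVO)

lemma range_residual_ExEO:
  "range (residual (ExEO x \<psi>)) \<subseteq> (\<lambda>(H, h0) \<beta>. right_asg \<beta> \<and>
      ((\<exists>h\<in>H. h \<beta>) \<or> (\<exists>e\<in>E - EL. h0 (\<beta>\<lparr>aeo := (aeo \<beta>)(x := e)\<rparr>))))
    ` (Pow (range (residual \<psi>)) \<times> range (residual \<psi>))"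
  by (rule range_subset_imageI[where w = "\<lambda>\<alpha>.
      ((\<lambda>e. residual \<psi> (\<alpha>\<lparr>aeo := (aeo \<alpha>)(x := e)\<rparr>)) ` (E \<inter> EL),
       residual \<psi> (\<alpha>\<lparr>aeo := (aeo \<alpha>)(x := SOME e. e \<in> E - EL)\<rparr>))"])
    (auto simp: residual_ExEO)

lemma range_residual_ExVS:
  "range (residual (ExVS X \<psi>)) \<subseteq> (\<lambda>H \<beta>. right_asg \<beta> \<and>
      (\<exists>h\<in>H. \<exists>S \<subseteq> V - VL. h (\<beta>\<lparr>avs := (avs \<beta>)(X := S)\<rparr>))) ` Pow (range (residual \<psi>))"
  by (rule range_subset_imageI[where w = "\<lambda>\<alpha>.
      (\<lambda>S. residual \<psi> (\<alpha>\<lparr>avs := (avs \<alpha>)(X := S)\<rparr>)) ` Pow (V \<inter> VL)"])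
    (auto simp: residual_ExVS)

lemma range_residual_ExES:
  "range (residual (ExES X \<psi>)) \<subseteq> (\<lambda>H \<beta>. right_asg \<beta> \<and>
      (\<exists>h\<in>H. \<exists>S \<subseteq> E - EL. h (\<beta>\<lparr>aes := (aes \<beta>)(X := S)\<rparr>))) ` Pow (range (residual \<psi>))"
  by (rule range_subset_imageI[where w = "\<lambda>\<alpha>.
      (\<lambda>S. residual \<psi> (\<alpha>\<lparr>aes := (aes \<alpha>)(X := S)\<rparr>)) ` Pow (E \<inter> EL)"])
    (auto simp: residual_ExES)

theorem card_le_range_residual: "card_le (range (residual \<psi>)) (tower (card BV) (msize \<psi>))"
proof (induction \<psi>)
  case (Adj x e)
  show ?case
    by (rule card_le_range_residual_Adj)
next
  case (EqV x y)
  show ?case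
    by (rule card_le_range_residual_atom[where P = "\<lambda>\<beta>. avo \<beta> x = avo \<beta> y"])
      (auto simp: residual_EqV)
next
  case (EqE x y)
  show ?case
    by (rule card_le_range_residual_atom[where P = "\<lambda>\<beta>. aeo \<beta> x = aeo \<beta> y"])
      (auto simp: residual_EqE)
next
  case (InV x X)
  show ?case
    by (rule card_le_range_residual_atom[where P = "\<lambda>\<beta>. avo \<beta> x \<in> avs \<beta> X"])
      (auto simp: residual_InV)
next
  case (InE x X)
  show ?case
    by (rule card_le_range_residual_atom[where P = "\<lambda>\<beta>. aeo \<beta> x \<in> aes \<beta> X"])
      (auto simp: residual_InE)
next
  case (Neg \<psi>)
  have "card_le (range (residual \<psi>)) (tower (card BV) (Suc (msize \<psi>)))"
    using Neg.IH tower_le_Suc by (rule card_le_mono)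
  then show ?case
    using card_le_subset_image[OF range_residual_Neg] by simp
next
  case (Conj \<psi>1 \<psi>2)
  let ?s = "msize \<psi>1 + msize \<psi>2"
  have "card_le (range (residual \<psi>1) \<times> range (residual \<psi>2)) (tower (card BV) (Suc ?s))"
    using Conj.IH tower_mono[of "card BV" "card BV"]
    by (intro card_le_Times_tower) (auto intro: card_le_mono)
  then show ?case
    using card_le_subset_image[OF range_residual_Conj] by simp
next
  case (ExVO x \<psi>)
  show ?case
    using card_le_subset_image[OF range_residual_ExVO card_le_Pow_Times_tower[OF ExVO.IH]] by simp
next
  case (ExEO x \<psi>)
  show ?case
    using card_le_subset_image[OF range_residual_ExEO card_le_Pow_Times_tower[OF ExEO.IH]] by simp
next
  case (ExVS X \<psi>)
  show ?case
    using card_le_subset_image[OF range_residual_ExVS card_le_Pow_tower[OF ExVS.IH]] by simp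
next
  case (ExES X \<psi>)
  show ?case
    using card_le_subset_image[OF range_residual_ExES card_le_Pow_tower[OF ExES.IH]] by simp
qed

end

section \<open>Cofactors of the function at a cut\<close>

lemma dvars_iff [simp]:
  "DVO x v \<in> dvars \<phi> V E \<longleftrightarrow> x \<in> fvo \<phi> \<and> v \<in> V"
  "DEO x e \<in> dvars \<phi> V E \<longleftrightarrow> x \<in> feo \<phi> \<and> e \<in> E"
  "DVS X v \<in> dvars \<phi> V E \<longleftrightarrow> X \<in> fvs \<phi> \<and> v \<in> V"
  "DES X e \<in> dvars \<phi> V E \<longleftrightarrow> X \<in> fes \<phi> \<and> e \<in> E"
  by (auto simp: dvars_def)

lemma ball_if_conj_split:
  "T \<subseteq> S \<Longrightarrow> (\<forall>x\<in>S. if x \<in> T then P x \<and> Q x else R x) \<longleftrightarrow>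
    (\<forall>x\<in>T. P x) \<and> (\<forall>x\<in>S. if x \<in> T then Q x else R x)"
  by auto

locale finite_graph_cut = graph_cut +
  assumes finite_vertices: "finite V" and empty_notin_edges: "{} \<notin> E"
    and left_vertices_subset: "VL \<subseteq> V" and left_edges_subset: "EL \<subseteq> E"
begin

definition outside_vertex :: nat where
  "outside_vertex = (SOME v. v \<notin> V)"

lemma outside_vertex: "outside_vertex \<notin> V"
  unfolding outside_vertex_def
  using ex_new_if_finite[OF infinite_UNIV_nat finite_vertices] by (rule someI_ex)

text \<open>An object variable without a unique value in the part decodes to a default outside the
  graph (\<open>outside_vertex\<close>, resp. \<open>{}\<close>), which \<open>glue\<close> then ignores.\<close>

definition decode_part :: "nat set \<Rightarrow> nat set set \<Rightarrow> (dvar \<Rightarrow> bool) \<Rightarrow> asg" where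
  "decode_part VP EP \<delta> = \<lparr> avo = (\<lambda>x. the_in VP (\<lambda>v. \<delta> (DVO x v)) outside_vertex),
                          aeo = (\<lambda>x. the_in EP (\<lambda>e. \<delta> (DEO x e)) {}),
                          avs = (\<lambda>X. {v \<in> VP. \<delta> (DVS X v)}),
                          aes = (\<lambda>X. {e \<in> EP. \<delta> (DES X e)}) \<rparr>"

lemma right_asg_decode_part: "right_asg (decode_part (V - VL) (E - EL) \<sigma>)"
  unfolding right_asg_def
proof (intro conjI allI)
  fix x
  have "the_in (V - VL) (\<lambda>v. \<sigma> (DVO x v)) outside_vertex \<notin> VL"
    using the_in_in_insert[of "V - VL" "\<lambda>v. \<sigma> (DVO x v)" outside_vertex] outside_vertex
      left_vertices_subset by auto
  then show "avo (decode_part (V - VL) (E - EL) \<sigma>) x \<notin> VL"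
    by (simp add: decode_part_def)
  have e: "aeo (decode_part (V - VL) (E - EL) \<sigma>) x \<in> insert {} (E - EL)"
    using the_in_in_insert[of "E - EL" "\<lambda>e. \<sigma> (DEO x e)" "{}"] by (simp add: decode_part_def)
  then show "aeo (decode_part (V - VL) (E - EL) \<sigma>) x \<notin> EL"
    using left_edges_subset empty_notin_edges by auto
  show "aeo (decode_part (V - VL) (E - EL) \<sigma>) x \<inter> VL \<subseteq> BV"
    using e crossing_edge_boundary by auto
qed

lemma sat_decode_eq_sat_glue:
  assumes "consistent \<phi> V E \<delta>"
  defines "\<alpha> \<equiv> glue (decode_part VL EL \<delta>) (decode_part (V - VL) (E - EL) \<delta>)"
  shows "sat V E (decode V E \<delta>) \<phi> = sat V E \<alpha> \<phi>"
proof (rule sat_cong)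
  show "\<forall>x\<in>fvo \<phi>. avo (decode V E \<delta>) x = avo \<alpha> x"
  proof
    fix x
    assume "x \<in> fvo \<phi>"
    then have "\<exists>!v. v \<in> V \<and> \<delta> (DVO x v)"
      using assms(1) by (simp add: consistent_def)
    moreover have "outside_vertex \<notin> VL"
      using outside_vertex left_vertices_subset by auto
    ultimately show "avo (decode V E \<delta>) x = avo \<alpha> x"
      using the_eq_the_in_split[OF _ left_vertices_subset, of _ outside_vertex outside_vertex]
      by (simp add: \<alpha>_def decode_def glue_def decode_part_def)
  qed
  show "\<forall>x\<in>feo \<phi>. aeo (decode V E \<delta>) x = aeo \<alpha> x"
  proof
    fix x
    assume "x \<in> feo \<phi>"
    then have "\<exists>!e. e \<in> E \<and> \<delta> (DEO x e)"
      using assms(1) by (simp add: consistent_def)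
    moreover have "{} \<notin> EL"
      using empty_notin_edges left_edges_subset by auto
    ultimately show "aeo (decode V E \<delta>) x = aeo \<alpha> x"
      using the_eq_the_in_split[OF _ left_edges_subset, of _ "{}" "{}"]
      by (simp add: \<alpha>_def decode_def glue_def decode_part_def)
  qed
  show "\<forall>X\<in>fvs \<phi>. avs (decode V E \<delta>) X = avs \<alpha> X"
    and "\<forall>X\<in>fes \<phi>. aes (decode V E \<delta>) X = aes \<alpha> X"
    using left_vertices_subset left_edges_subset
    by (auto simp: \<alpha>_def decode_def glue_def decode_part_def)
qed

definition left_bound_vo :: "mso \<Rightarrow> (dvar \<Rightarrow> bool) \<Rightarrow> nat set" where
  "left_bound_vo \<phi> \<delta> = {x \<in> fvo \<phi>. \<exists>v\<in>VL. \<delta> (DVO x v)}"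

definition left_bound_eo :: "mso \<Rightarrow> (dvar \<Rightarrow> bool) \<Rightarrow> nat set" where
  "left_bound_eo \<phi> \<delta> = {x \<in> feo \<phi>. \<exists>e\<in>EL. \<delta> (DEO x e)}"

definition left_consistent :: "mso \<Rightarrow> (dvar \<Rightarrow> bool) \<Rightarrow> bool" where
  "left_consistent \<phi> \<delta> \<longleftrightarrow> (\<forall>x \<in> left_bound_vo \<phi> \<delta>. \<exists>!v. v \<in> VL \<and> \<delta> (DVO x v))
     \<and> (\<forall>x \<in> left_bound_eo \<phi> \<delta>. \<exists>!e. e \<in> EL \<and> \<delta> (DEO x e))"

definition right_consistent :: "mso \<Rightarrow> nat set \<Rightarrow> nat set \<Rightarrow> (dvar \<Rightarrow> bool) \<Rightarrow> bool" where
  "right_consistent \<phi> A B \<sigma> \<longleftrightarrow>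
     (\<forall>x\<in>fvo \<phi>. if x \<in> A then \<forall>v \<in> V - VL. \<not> \<sigma> (DVO x v) else \<exists>!v. v \<in> V - VL \<and> \<sigma> (DVO x v))
   \<and> (\<forall>x\<in>feo \<phi>. if x \<in> B then \<forall>e \<in> E - EL. \<not> \<sigma> (DEO x e) else \<exists>!e. e \<in> E - EL \<and> \<sigma> (DEO x e))"

lemma ex1_vertex_override_on:
  assumes "x \<in> fvo \<phi>"
  shows "(\<exists>!v. v \<in> V \<and> override_on \<sigma> \<delta> (dvars \<phi> VL EL) (DVO x v)) \<longleftrightarrow>
    (if x \<in> left_bound_vo \<phi> \<delta>
     then (\<exists>!v. v \<in> VL \<and> \<delta> (DVO x v)) \<and> (\<forall>v\<in>V - VL. \<not> \<sigma> (DVO x v))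
     else \<exists>!v. v \<in> V - VL \<and> \<sigma> (DVO x v))"
proof -
  have "(\<exists>!v. v \<in> V \<and> override_on \<sigma> \<delta> (dvars \<phi> VL EL) (DVO x v)) \<longleftrightarrow>
      (\<exists>!v. v \<in> V \<and> (if v \<in> VL then \<delta> (DVO x v) else \<sigma> (DVO x v)))"
    using assms by (simp add: override_on_def)
  also have "\<dots> \<longleftrightarrow> (if \<exists>v\<in>VL. \<delta> (DVO x v)
      then (\<exists>!v. v \<in> VL \<and> \<delta> (DVO x v)) \<and> (\<forall>v\<in>V - VL. \<not> \<sigma> (DVO x v))
      else \<exists>!v. v \<in> V - VL \<and> \<sigma> (DVO x v))"
    by (rule ex1_override_split[OF left_vertices_subset])
  finally show ?thesis
    using assms by (simp add: left_bound_vo_def)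
qed

lemma ex1_edge_override_on:
  assumes "x \<in> feo \<phi>"
  shows "(\<exists>!e. e \<in> E \<and> override_on \<sigma> \<delta> (dvars \<phi> VL EL) (DEO x e)) \<longleftrightarrow>
    (if x \<in> left_bound_eo \<phi> \<delta>
     then (\<exists>!e. e \<in> EL \<and> \<delta> (DEO x e)) \<and> (\<forall>e\<in>E - EL. \<not> \<sigma> (DEO x e))
     else \<exists>!e. e \<in> E - EL \<and> \<sigma> (DEO x e))"
proof -
  have "(\<exists>!e. e \<in> E \<and> override_on \<sigma> \<delta> (dvars \<phi> VL EL) (DEO x e)) \<longleftrightarrow>
      (\<exists>!e. e \<in> E \<and> (if e \<in> EL then \<delta> (DEO x e) else \<sigma> (DEO x e)))"
    using assms by (simp add: override_on_def)
  also have "\<dots> \<longleftrightarrow> (if \<exists>e\<in>EL. \<delta> (DEO x e)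
      then (\<exists>!e. e \<in> EL \<and> \<delta> (DEO x e)) \<and> (\<forall>e\<in>E - EL. \<not> \<sigma> (DEO x e))
      else \<exists>!e. e \<in> E - EL \<and> \<sigma> (DEO x e))"
    by (rule ex1_override_split[OF left_edges_subset])
  finally show ?thesis
    using assms by (simp add: left_bound_eo_def)
qed

lemma consistent_override_on:
  "consistent \<phi> V E (override_on \<sigma> \<delta> (dvars \<phi> VL EL)) \<longleftrightarrow>
    left_consistent \<phi> \<delta> \<and> right_consistent \<phi> (left_bound_vo \<phi> \<delta>) (left_bound_eo \<phi> \<delta>) \<sigma>"
proof -
  have "left_bound_vo \<phi> \<delta> \<subseteq> fvo \<phi>" "left_bound_eo \<phi> \<delta> \<subseteq> feo \<phi>"
    by (auto simp: left_bound_vo_def left_bound_eo_def)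
  note split = ball_if_conj_split[OF this(1)] ball_if_conj_split[OF this(2)]
  have "consistent \<phi> V E (override_on \<sigma> \<delta> (dvars \<phi> VL EL)) \<longleftrightarrow>
    (\<forall>x\<in>fvo \<phi>. if x \<in> left_bound_vo \<phi> \<delta>
      then (\<exists>!v. v \<in> VL \<and> \<delta> (DVO x v)) \<and> (\<forall>v\<in>V - VL. \<not> \<sigma> (DVO x v))
      else \<exists>!v. v \<in> V - VL \<and> \<sigma> (DVO x v)) \<and>
    (\<forall>x\<in>feo \<phi>. if x \<in> left_bound_eo \<phi> \<delta>
      then (\<exists>!e. e \<in> EL \<and> \<delta> (DEO x e)) \<and> (\<forall>e\<in>E - EL. \<not> \<sigma> (DEO x e))
      else \<exists>!e. e \<in> E - EL \<and> \<sigma> (DEO x e))"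
    unfolding consistent_def
    by (intro conj_cong ball_cong refl ex1_vertex_override_on ex1_edge_override_on)
  then show ?thesis
    unfolding left_consistent_def right_consistent_def split by (simp only: conj_ac)
qed

lemma sat_glue_decode_part_override_on:
  fixes \<phi> :: mso and \<delta> \<sigma> :: "dvar \<Rightarrow> bool"
  defines "\<delta>' \<equiv> override_on \<sigma> \<delta> (dvars \<phi> VL EL)"
  shows "sat V E (glue (decode_part VL EL \<delta>') (decode_part (V - VL) (E - EL) \<delta>')) \<phi> =
    sat V E (glue (decode_part VL EL \<delta>) (decode_part (V - VL) (E - EL) \<sigma>)) \<phi>"
proof (rule sat_cong)
  have "the_in VL (\<lambda>v. \<delta>' (DVO x v)) d = the_in VL (\<lambda>v. \<delta> (DVO x v)) d"
    if "x \<in> fvo \<phi>" for x d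
    using that by (intro the_in_cong) (auto simp: \<delta>'_def override_on_def)
  moreover have "the_in (V - VL) (\<lambda>v. \<delta>' (DVO x v)) d = the_in (V - VL) (\<lambda>v. \<sigma> (DVO x v)) d"
    if "x \<in> fvo \<phi>" for x d
    using that by (intro the_in_cong) (auto simp: \<delta>'_def override_on_def)
  ultimately show "\<forall>x\<in>fvo \<phi>. avo (glue (decode_part VL EL \<delta>') (decode_part (V - VL) (E - EL) \<delta>')) x =
      avo (glue (decode_part VL EL \<delta>) (decode_part (V - VL) (E - EL) \<sigma>)) x"
    by (simp add: glue_def decode_part_def)
  have "the_in EL (\<lambda>e. \<delta>' (DEO x e)) d = the_in EL (\<lambda>e. \<delta> (DEO x e)) d"
    if "x \<in> feo \<phi>" for x d
    using that by (intro the_in_cong) (auto simp: \<delta>'_def override_on_def)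
  moreover have "the_in (E - EL) (\<lambda>e. \<delta>' (DEO x e)) d = the_in (E - EL) (\<lambda>e. \<sigma> (DEO x e)) d"
    if "x \<in> feo \<phi>" for x d
    using that by (intro the_in_cong) (auto simp: \<delta>'_def override_on_def)
  ultimately show "\<forall>x\<in>feo \<phi>. aeo (glue (decode_part VL EL \<delta>') (decode_part (V - VL) (E - EL) \<delta>')) x =
      aeo (glue (decode_part VL EL \<delta>) (decode_part (V - VL) (E - EL) \<sigma>)) x"
    by (simp add: glue_def decode_part_def)
qed (auto simp: \<delta>'_def glue_def decode_part_def)

lemma Ffun_override_on:
  "Ffun \<phi> V E (override_on \<sigma> \<delta> (dvars \<phi> VL EL)) \<longleftrightarrow>
    left_consistent \<phi> \<delta> \<and> right_consistent \<phi> (left_bound_vo \<phi> \<delta>) (left_bound_eo \<phi> \<delta>) \<sigma> \<and>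
    residual \<phi> (decode_part VL EL \<delta>) (decode_part (V - VL) (E - EL) \<sigma>)"
proof -
  let ?\<delta>' = "override_on \<sigma> \<delta> (dvars \<phi> VL EL)"
  have "sat V E (decode V E ?\<delta>') \<phi> =
      sat V E (glue (decode_part VL EL \<delta>) (decode_part (V - VL) (E - EL) \<sigma>)) \<phi>"
    if "consistent \<phi> V E ?\<delta>'"
    using sat_decode_eq_sat_glue[OF that] sat_glue_decode_part_override_on by simp
  then show ?thesis
    unfolding Ffun_def residual_def using consistent_override_on right_asg_decode_part by auto
qed

theorem card_le_cofactors_cut:
  "card_le (cofactors (Ffun \<phi> V E) (dvars \<phi> VL EL))
    (1 + 2 ^ (card (fvo \<phi>) + card (feo \<phi>)) * tower (card BV) (msize \<phi>))"
proof -
  define \<Psi> where "\<Psi> = (\<lambda>(A, B, h) \<sigma>. right_consistent \<phi> A B \<sigma> \<and> h (decode_part (V - VL) (E - EL) \<sigma>))"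
  let ?T = "Pow (fvo \<phi>) \<times> Pow (feo \<phi>) \<times> range (residual \<phi>)"
  have "cofactors (Ffun \<phi> V E) (dvars \<phi> VL EL) \<subseteq> insert (\<lambda>\<sigma>. False) (\<Psi> ` ?T)"
  proof
    fix h
    assume "h \<in> cofactors (Ffun \<phi> V E) (dvars \<phi> VL EL)"
    then obtain \<delta> where h: "h = (\<lambda>\<sigma>. Ffun \<phi> V E (override_on \<sigma> \<delta> (dvars \<phi> VL EL)))"
      by (auto simp: cofactors_def)
    show "h \<in> insert (\<lambda>\<sigma>. False) (\<Psi> ` ?T)"
    proof (cases "left_consistent \<phi> \<delta>")
      case True
      then have "h = \<Psi> (left_bound_vo \<phi> \<delta>, left_bound_eo \<phi> \<delta>, residual \<phi> (decode_part VL EL \<delta>))"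
        unfolding h \<Psi>_def by (simp add: Ffun_override_on)
      moreover have "(left_bound_vo \<phi> \<delta>, left_bound_eo \<phi> \<delta>, residual \<phi> (decode_part VL EL \<delta>)) \<in> ?T"
        by (auto simp: left_bound_vo_def left_bound_eo_def)
      ultimately show ?thesis
        by blast
    qed (simp add: h Ffun_override_on)
  qed
  moreover have "card_le (insert (\<lambda>\<sigma>. False) (\<Psi> ` ?T))
      (1 + 2 ^ (card (fvo \<phi>) + card (feo \<phi>)) * tower (card BV) (msize \<phi>))"
  proof -
    have "card_le ?T (2 ^ card (fvo \<phi>) * (2 ^ card (feo \<phi>) * tower (card BV) (msize \<phi>)))"
      using card_le_range_residual[of \<phi>] finite_free_vars
      by (intro card_le_Times card_le_Pow card_le_card)
    then show ?thesis
      by (simp add: card_le_insert card_le_image power_add mult.assoc)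
  qed
  ultimately show ?thesis
    by (rule card_le_subset)
qed

end

section \<open>Ordering the variables along a path decomposition\<close>

lemma graph_edge_subset: "graph V E \<Longrightarrow> e \<in> E \<Longrightarrow> e \<subseteq> V"
  unfolding graph_def by blast

lemma graph_edge_eq: "graph V E \<Longrightarrow> e \<in> E \<Longrightarrow> e = {Min e, Max e}"
proof -
  assume "graph V E" "e \<in> E"
  then obtain u v where "e = {u, v}"
    unfolding graph_def by blast
  then show "e = {Min e, Max e}"
    by (auto simp: min_def max_def)
qed

lemma graph_empty_notin_edges: "graph V E \<Longrightarrow> {} \<notin> E"
  unfolding graph_def by blast

lemma graph_finite_edges: "graph V E \<Longrightarrow> finite E"
proof -
  assume "graph V E"
  then have "E \<subseteq> Pow V" "finite V"
    unfolding graph_def by auto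
  then show "finite E"
    by (meson finite_Pow_iff finite_subset)
qed

lemma ex_optimal_path_decomp: "graph V E \<Longrightarrow> \<exists>B. path_decomp V E B \<and> pd_width B = pathwidth V E"
proof -
  assume "graph V E"
  then have "path_decomp V E [V]"
    using graph_edge_subset unfolding path_decomp_def by (auto simp: nth_Cons')
  then have "\<exists>B. path_decomp V E B \<and> pd_width B = pd_width [V]"
    by blast
  then show ?thesis
    unfolding pathwidth_def by (rule LeastI)
qed

lemma card_bag_le_width: "i < length B \<Longrightarrow> card (B ! i) \<le> pd_width B + 1"
proof -
  assume "i < length B"
  then have "card (B ! i) \<le> Max (card ` set B)"
    by (simp add: Max_ge)
  then show ?thesis
    unfolding pd_width_def by linarith
qed

definition first_bag :: "nat set list \<Rightarrow> (nat set \<Rightarrow> bool) \<Rightarrow> nat" where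
  "first_bag B P = (LEAST i. i < length B \<and> P (B ! i))"

lemma first_bag:
  assumes "\<exists>b\<in>set B. P b"
  shows "first_bag B P < length B" and "P (B ! first_bag B P)"
    and "i < length B \<Longrightarrow> P (B ! i) \<Longrightarrow> first_bag B P \<le> i"
proof -
  have "\<exists>i. i < length B \<and> P (B ! i)"
    using assms by (metis in_set_conv_nth)
  then have "first_bag B P < length B \<and> P (B ! first_bag B P)"
    unfolding first_bag_def by (rule LeastI_ex)
  then show "first_bag B P < length B" "P (B ! first_bag B P)"
    by auto
  show "i < length B \<Longrightarrow> P (B ! i) \<Longrightarrow> first_bag B P \<le> i"
    unfolding first_bag_def by (simp add: Least_le)
qed

text \<open>The last two components only give distinct objects distinct keys: an edge is determined
  by its minimum and maximum.\<close>

definition vertex_key :: "nat set list \<Rightarrow> nat \<Rightarrow> nat \<times> nat \<times> nat \<times> nat" where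
  "vertex_key B v = (first_bag B (\<lambda>b. v \<in> b), 0, v, 0)"

definition edge_key :: "nat set list \<Rightarrow> nat set \<Rightarrow> nat \<times> nat \<times> nat \<times> nat" where
  "edge_key B e = (first_bag B (\<lambda>b. e \<subseteq> b), 1, Min e, Max e)"

fun dvar_obj :: "dvar \<Rightarrow> nat + nat set" where
  "dvar_obj (DVO x v) = Inl v"
| "dvar_obj (DVS X v) = Inl v"
| "dvar_obj (DEO x e) = Inr e"
| "dvar_obj (DES X e) = Inr e"

definition dvar_key :: "nat set list \<Rightarrow> dvar \<Rightarrow> nat \<times> nat \<times> nat \<times> nat" where
  "dvar_key B d = (case dvar_obj d of Inl v \<Rightarrow> vertex_key B v | Inr e \<Rightarrow> edge_key B e)"

lemma vertex_key_less_edge_key: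
  assumes "path_decomp V E B" "e \<in> E" "v \<in> e"
  shows "vertex_key B v < edge_key B e"
proof -
  have "\<exists>b\<in>set B. e \<subseteq> b"
    using assms(1,2) unfolding path_decomp_def by blast
  then have "first_bag B (\<lambda>b. v \<in> b) \<le> first_bag B (\<lambda>b. e \<subseteq> b)"
    using first_bag[of B "\<lambda>b. e \<subseteq> b"] first_bag(3)[of B "\<lambda>b. v \<in> b"] assms(3) by blast
  then show ?thesis
    by (simp add: vertex_key_def edge_key_def)
qed

lemma first_bag_key_less_length:
  assumes "path_decomp V E B" "d \<in> dvars \<phi> V E"
  shows "fst (dvar_key B d) < length B"
proof -
  have "\<exists>b\<in>set B. v \<in> b" if "v \<in> V" for v
    using assms(1) that unfolding path_decomp_def by blast
  moreover have "\<exists>b\<in>set B. e \<subseteq> b" if "e \<in> E" for e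
    using assms(1) that unfolding path_decomp_def by blast
  ultimately show ?thesis
    using assms(2) first_bag(1) by (cases d) (auto simp: dvar_key_def vertex_key_def edge_key_def)
qed

lemma boundary_subset_bag:
  assumes "graph V E" "path_decomp V E B" "fst k < length B"
  shows "{v \<in> V. vertex_key B v < k} \<inter> \<Union>(E - {e \<in> E. edge_key B e < k}) \<subseteq> B ! fst k"
proof
  fix v
  assume "v \<in> {v \<in> V. vertex_key B v < k} \<inter> \<Union>(E - {e \<in> E. edge_key B e < k})"
  then obtain e where v: "v \<in> V" "vertex_key B v < k" and e: "e \<in> E" "\<not> edge_key B e < k" "v \<in> e"
    by blast
  have "\<exists>b\<in>set B. v \<in> b" "\<exists>b\<in>set B. e \<subseteq> b"
    using assms(2) v(1) e(1) unfolding path_decomp_def by blast+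
  then have "first_bag B (\<lambda>b. v \<in> b) < length B" "v \<in> B ! first_bag B (\<lambda>b. v \<in> b)"
    "first_bag B (\<lambda>b. e \<subseteq> b) < length B" "v \<in> B ! first_bag B (\<lambda>b. e \<subseteq> b)"
    using first_bag(1,2) e(3) by blast+
  moreover have "first_bag B (\<lambda>b. v \<in> b) \<le> fst k" "fst k \<le> first_bag B (\<lambda>b. e \<subseteq> b)"
    using v(2) e(2) by (auto simp: vertex_key_def edge_key_def less_eq_prod_def less_prod_def)
  ultimately show "v \<in> B ! fst k"
    using assms(2) unfolding path_decomp_def by blast
qed

lemma dvar_key_eq_imp_dvar_obj_eq:
  assumes "graph V E" "d \<in> dvars \<phi> V E" "d' \<in> dvars \<phi> V E" "dvar_key B d = dvar_key B d'"
  shows "dvar_obj d = dvar_obj d'"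
proof -
  have edges: "e \<in> E" "e' \<in> E" if "dvar_obj d = Inr e" "dvar_obj d' = Inr e'" for e e'
    using that assms(2,3) by (cases d; cases d'; simp)+
  show ?thesis
  proof (cases "dvar_obj d"; cases "dvar_obj d'")
    fix e e'
    assume "dvar_obj d = Inr e" "dvar_obj d' = Inr e'"
    moreover from this assms(4) have "Min e = Min e'" "Max e = Max e'"
      by (simp_all add: dvar_key_def edge_key_def)
    ultimately show ?thesis
      using graph_edge_eq[OF assms(1)] edges by metis
  qed (use assms(4) in \<open>simp_all add: dvar_key_def vertex_key_def edge_key_def\<close>)
qed

lemma card_le_dvars_of_obj: "card_le {d \<in> dvars \<phi> V E. dvar_obj d = obj} (msize \<phi>)"
proof (cases obj)
  case (Inl v)
  have "{d \<in> dvars \<phi> V E. dvar_obj d = obj} \<subseteq> (\<lambda>x. DVO x v) ` fvo \<phi> \<union> (\<lambda>X. DVS X v) ` fvs \<phi>"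
  proof
    fix d
    assume "d \<in> {d \<in> dvars \<phi> V E. dvar_obj d = obj}"
    then show "d \<in> (\<lambda>x. DVO x v) ` fvo \<phi> \<union> (\<lambda>X. DVS X v) ` fvs \<phi>"
      using Inl by (cases d) auto
  qed
  moreover have "card_le ((\<lambda>x. DVO x v) ` fvo \<phi> \<union> (\<lambda>X. DVS X v) ` fvs \<phi>)
      (card (fvo \<phi>) + card (fvs \<phi>))"
    using finite_free_vars by (intro card_le_Un card_le_image card_le_card)
  moreover have "card (fvo \<phi>) + card (fvs \<phi>) \<le> msize \<phi>"
    using card_free_vars_le_msize[of \<phi>] by linarith
  ultimately show ?thesis
    by (meson card_le_mono card_le_subset)
next
  case (Inr e)
  have "{d \<in> dvars \<phi> V E. dvar_obj d = obj} \<subseteq> (\<lambda>x. DEO x e) ` feo \<phi> \<union> (\<lambda>X. DES X e) ` fes \<phi>"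
  proof
    fix d
    assume "d \<in> {d \<in> dvars \<phi> V E. dvar_obj d = obj}"
    then show "d \<in> (\<lambda>x. DEO x e) ` feo \<phi> \<union> (\<lambda>X. DES X e) ` fes \<phi>"
      using Inr by (cases d) auto
  qed
  moreover have "card_le ((\<lambda>x. DEO x e) ` feo \<phi> \<union> (\<lambda>X. DES X e) ` fes \<phi>)
      (card (feo \<phi>) + card (fes \<phi>))"
    using finite_free_vars by (intro card_le_Un card_le_image card_le_card)
  moreover have "card (feo \<phi>) + card (fes \<phi>) \<le> msize \<phi>"
    using card_free_vars_le_msize[of \<phi>] by linarith
  ultimately show ?thesis
    by (meson card_le_mono card_le_subset)
qed

lemma finite_graph_cut_key_prefix:
  assumes "graph V E" "path_decomp V E B"
  shows "finite_graph_cut V E {v \<in> V. vertex_key B v < k} {e \<in> E. edge_key B e < k}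
    ({v \<in> V. vertex_key B v < k} \<inter> \<Union>(E - {e \<in> E. edge_key B e < k}))"
proof unfold_locales
  fix e
  assume "e \<in> {e \<in> E. edge_key B e < k}"
  then show "e \<subseteq> {v \<in> V. vertex_key B v < k}"
    using graph_edge_subset[OF assms(1)] vertex_key_less_edge_key[OF assms(2)] by fastforce
next
  show "finite V"
    using assms(1) by (simp add: graph_def)
  then show "finite ({v \<in> V. vertex_key B v < k} \<inter> \<Union>(E - {e \<in> E. edge_key B e < k}))"
    by simp
qed (use graph_empty_notin_edges[OF assms(1)] in auto)

lemma set_take_sorted_key:
  assumes "sorted (map f ds)" and "j < length ds"
  shows "{d \<in> set ds. f d < f (ds ! j)} \<subseteq> set (take j ds)"
    and "set (take j ds) \<subseteq> {d \<in> set ds. f d \<le> f (ds ! j)}"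
proof -
  have mono: "f (ds ! i) \<le> f (ds ! i')" if "i \<le> i'" "i' < length ds" for i i'
    using sorted_nth_mono[OF assms(1), of i i'] that by simp
  show "{d \<in> set ds. f d < f (ds ! j)} \<subseteq> set (take j ds)"
  proof
    fix d
    assume d: "d \<in> {d \<in> set ds. f d < f (ds ! j)}"
    then obtain i where i: "i < length ds" "ds ! i = d"
      by (auto simp: in_set_conv_nth)
    then have "i < j"
      using mono[of j i] d by (metis (mono_tags) leI mem_Collect_eq not_le)
    then show "d \<in> set (take j ds)"
      using i by (auto simp: in_set_conv_nth)
  qed
  show "set (take j ds) \<subseteq> {d \<in> set ds. f d \<le> f (ds ! j)}"
    using mono assms(2) by (auto simp: in_set_conv_nth dest: in_set_takeD)
qed

lemma card_boundary_le_width: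
  assumes "graph V E" "path_decomp V E B" "d \<in> dvars \<phi> V E"
  defines "k \<equiv> dvar_key B d"
  shows "card ({v \<in> V. vertex_key B v < k} \<inter> \<Union>(E - {e \<in> E. edge_key B e < k})) \<le> pd_width B + 1"
proof -
  have c: "fst k < length B"
    unfolding k_def using assms(2,3) by (rule first_bag_key_less_length)
  then have "finite (B ! fst k)"
    using assms(1,2) unfolding path_decomp_def graph_def by (meson finite_subset nth_mem)
  then have "card ({v \<in> V. vertex_key B v < k} \<inter> \<Union>(E - {e \<in> E. edge_key B e < k})) \<le> card (B ! fst k)"
    using boundary_subset_bag[OF assms(1,2) c] by (rule card_mono)
  also have "\<dots> \<le> pd_width B + 1"
    using c by (rule card_bag_le_width)
  finally show ?thesis .
qed

lemma set_take_key_prefix: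
  assumes "graph V E" and ds: "set ds = dvars \<phi> V E" "sorted (map (dvar_key B) ds)" and j: "j < length ds"
  defines "k \<equiv> dvar_key B (ds ! j)"
  obtains Q where "set (take j ds) = dvars \<phi> {v \<in> V. vertex_key B v < k} {e \<in> E. edge_key B e < k} \<union> Q"
    and "card_le Q (msize \<phi>)"
proof -
  let ?L = "dvars \<phi> {v \<in> V. vertex_key B v < k} {e \<in> E. edge_key B e < k}"
  have d0: "ds ! j \<in> dvars \<phi> V E"
    using j ds(1) nth_mem by blast
  have left: "?L = {d \<in> set ds. dvar_key B d < k}"
  proof -
    have "d \<in> ?L \<longleftrightarrow> d \<in> dvars \<phi> V E \<and> dvar_key B d < k" for d
      by (cases d) (auto simp: dvar_key_def)
    then show ?thesis
      using ds(1) by blast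
  qed
  have "set (take j ds) - ?L \<subseteq> {d \<in> dvars \<phi> V E. dvar_obj d = dvar_obj (ds ! j)}"
  proof
    fix d
    assume "d \<in> set (take j ds) - ?L"
    then have "d \<in> dvars \<phi> V E" "dvar_key B d = k"
      using set_take_sorted_key(2)[OF ds(2) j] ds(1) left unfolding k_def by auto
    then show "d \<in> {d \<in> dvars \<phi> V E. dvar_obj d = dvar_obj (ds ! j)}"
      using dvar_key_eq_imp_dvar_obj_eq[OF assms(1) _ d0] unfolding k_def by auto
  qed
  then have "card_le (set (take j ds) - ?L) (msize \<phi>)"
    using card_le_dvars_of_obj by (rule card_le_subset)
  moreover have "set (take j ds) = ?L \<union> (set (take j ds) - ?L)"
    using set_take_sorted_key(1)[OF ds(2) j] left unfolding k_def by blast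
  ultimately show ?thesis
    using that by blast
qed

theorem card_le_cofactors_level:
  assumes g: "graph V E" and pd: "path_decomp V E B"
    and ds: "set ds = dvars \<phi> V E" "sorted (map (dvar_key B) ds)" and j: "j < length ds"
  shows "card_le (cofactors (Ffun \<phi> V E) (set (take j ds))) (cofactor_bound (pd_width B) (msize \<phi>))"
proof -
  define k where "k = dvar_key B (ds ! j)"
  define VL where "VL = {v \<in> V. vertex_key B v < k}"
  define EL where "EL = {e \<in> E. edge_key B e < k}"
  define BV where "BV = VL \<inter> \<Union>(E - EL)"
  interpret finite_graph_cut V E VL EL BV
    unfolding VL_def EL_def BV_def using g pd by (rule finite_graph_cut_key_prefix)
  obtain Q where take: "set (take j ds) = dvars \<phi> VL EL \<union> Q" and Q: "card_le Q (msize \<phi>)"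
    using set_take_key_prefix[OF g ds j] unfolding VL_def EL_def k_def by blast
  have "ds ! j \<in> dvars \<phi> V E"
    using ds(1) j nth_mem by blast
  then have "card BV \<le> pd_width B + 1"
    unfolding BV_def VL_def EL_def k_def by (rule card_boundary_le_width[OF g pd])
  then have "1 + 2 ^ (card (fvo \<phi>) + card (feo \<phi>)) * tower (card BV) (msize \<phi>)
      \<le> 1 + 2 ^ msize \<phi> * tower (pd_width B + 1) (msize \<phi>)"
    using card_free_vars_le_msize[of \<phi>]
    by (intro add_mono mult_le_mono power_increasing tower_mono) auto
  then have "card_le (cofactors (Ffun \<phi> V E) (dvars \<phi> VL EL))
      (1 + 2 ^ msize \<phi> * tower (pd_width B + 1) (msize \<phi>))"
    using card_le_cofactors_cut by (rule card_le_mono[rotated])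
  then have "card_le (cofactors (Ffun \<phi> V E) (set (take j ds)))
      ((1 + 2 ^ msize \<phi> * tower (pd_width B + 1) (msize \<phi>)) * 2 ^ card Q)"
    unfolding take using Q by (intro card_le_cofactors_Un) (auto simp: card_le_def)
  moreover have "(1 + 2 ^ msize \<phi> * tower (pd_width B + 1) (msize \<phi>)) * 2 ^ card Q
      \<le> cofactor_bound (pd_width B) (msize \<phi>)"
  proof -
    have "2 ^ card Q \<le> (2 :: nat) ^ msize \<phi>"
      using Q by (simp add: card_le_def power_increasing)
    then show ?thesis
      unfolding cofactor_bound_def by (subst mult.commute) (rule mult_le_mono1)
  qed
  ultimately show ?thesis
    by (rule card_le_mono)
qed

lemma ex_obdd_of_path_decomp:
  assumes g: "graph V E" and pd: "path_decomp V E B"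
  shows "\<exists>t. obdd_computes (dvars \<phi> V E) (Ffun \<phi> V E) t \<and>
    card (bnodes t) \<le> (card (dvars \<phi> V E) + 1) * cofactor_bound (pd_width B) (msize \<phi>)"
proof -
  have "finite (dvars \<phi> V E)"
    using g graph_finite_edges card_le_dvars by (simp add: graph_def card_le_def)
  then obtain xs where xs: "set xs = dvars \<phi> V E" "distinct xs"
    using finite_distinct_list by blast
  define ds where "ds = sort_key (dvar_key B) xs"
  have ds: "distinct ds" "set ds = dvars \<phi> V E" "sorted (map (dvar_key B) ds)"
    using xs by (simp_all add: ds_def)
  have determined: "Ffun \<phi> V E \<sigma> = Ffun \<phi> V E \<sigma>'" if "\<forall>d\<in>dvars \<phi> V E. \<sigma> d = \<sigma>' d" for \<sigma> \<sigma>'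
    using that by (rule Ffun_cong)
  have "card_le (cofactors (Ffun \<phi> V E) (set (take j ds))) (cofactor_bound (pd_width B) (msize \<phi>))"
    if "j \<le> length ds" for j
  proof (cases "j < length ds")
    case False
    then have "card_le (cofactors (Ffun \<phi> V E) (set (take j ds))) 2"
      using determined ds(2) by (intro card_le_cofactors_determined) simp
    then show ?thesis
      using two_le_cofactor_bound by (rule card_le_mono)
  qed (rule card_le_cofactors_level[OF g pd ds(2,3)])
  then have "card (bnodes (decision_tree ds (Ffun \<phi> V E)))
      \<le> (card (dvars \<phi> V E) + 1) * cofactor_bound (pd_width B) (msize \<phi>)"
    using card_bnodes_decision_tree[OF ds(1)] distinct_card[OF ds(1)] ds(2) by simp
  moreover have "obdd_computes (dvars \<phi> V E) (Ffun \<phi> V E) (decision_tree ds (Ffun \<phi> V E))"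
    using ds(1,2) determined by (rule obdd_computes_decision_tree)
  ultimately show ?thesis
    by blast
qed

theorem mainTheorem2:
  shows "\<exists>f. computable f \<and>
    (\<forall>V E \<phi>. graph V E \<and> V \<noteq> {} \<longrightarrow>
       (\<exists>t. obdd_computes (dvars \<phi> V E) (Ffun \<phi> V E) t \<and>
            card (bnodes t) \<le> f (pathwidth V E + msize \<phi>) * (card V + card E)))"
proof (rule exI[of _ obdd_factor], intro conjI allI impI)
  show "computable obdd_factor"
    by (rule computable_obdd_factor)
  fix V E \<phi>
  assume "graph V E \<and> V \<noteq> {}"
  then have g: "graph V E" and n: "1 \<le> card V + card E"
    by (auto simp: graph_def Suc_le_eq card_gt_0_iff)
  obtain B where pd: "path_decomp V E B" and w: "pd_width B = pathwidth V E"
    using ex_optimal_path_decomp[OF g] by blast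
  obtain t where t: "obdd_computes (dvars \<phi> V E) (Ffun \<phi> V E) t"
    and size: "card (bnodes t) \<le> (card (dvars \<phi> V E) + 1) * cofactor_bound (pathwidth V E) (msize \<phi>)"
    using ex_obdd_of_path_decomp[OF g pd, of \<phi>] unfolding w by blast
  have "card (dvars \<phi> V E) \<le> msize \<phi> * (card V + card E)"
    using g graph_finite_edges card_le_dvars by (simp add: graph_def card_le_def)
  then have "card (bnodes t) \<le> obdd_factor (pathwidth V E + msize \<phi>) * (card V + card E)"
    using size obdd_size_le_obdd_factor[OF _ n] le_trans by blast
  with t show "\<exists>t. obdd_computes (dvars \<phi> V E) (Ffun \<phi> V E) t \<and>
      card (bnodes t) \<le> obdd_factor (pathwidth V E + msize \<phi>) * (card V + card E)"
    by blast
qed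

end
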